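(* Let $\mathbf X$ be a stationary $\beta$-mixing process on $[0,1]^{\mathbb N}$ with distribution $\mu$ and $\beta$-mixing coefficients $\boldsymbol\beta$ such that $\|\boldsymbol\beta\|<\infty$. Then for each $m\in\mathbb N$, \[\lim_{t\to\infty}\widehat\beta_t(\mathbf X,m)=\beta(m)\quad\mu\text{-a.s.},\qquad\text{and}\qquad\lim_{t\to\infty}\widetilde\theta_t(\mathbf X)=\|\boldsymbol\beta\|\quad\mu\text{-a.s.}\]
   Context: $X_t$ is the $t$-th coordinate. $\beta(\mathfrak U,\mathfrak V):=\sup_{W\in\mathfrak U\otimes\mathfrak V}|\mu_\otimes(W)-(\mu_{\mathfrak U}\times\mu_{\mathfrak V})(W)|$ ($\mu_\otimes$ pushforward of $\mu$ under $\omega\mapsto(\omega,\omega)$, $\mu_{\mathfrak U},\mu_{\mathfrak V}$ restrictions); $\beta(m):=\sup_j\beta(\sigma(X_1,\dots,X_j),\sigma(X_t:t\ge j+m))$; $\|\boldsymbol\beta\|:=\sum_m\beta(m)$; $\beta$-mixing means $\beta(m)\to0$. Dyadic cubes: $I_{\ell,i}=[i2^{-\ell},(i+1)2^{-\ell})$, $i=0,\dots,2^\ell-1$ (last interval closed); $\Delta_{k,\ell}$ the set of cubes $I_{\ell,i_1}\times\cdots\times I_{\ell,i_k}$. Empirical estimator: for $n>m$, $j\in\{1,\dots,n-m\}$, $j':=n-m-j+1$, $\mu_t(\mathbf X,B):=\frac1t\sum_{i=0}^{t-1}\mathbf 1\{(X_{ik+1},\dots,X_{(i+1)k})\in B\}$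 for $B\subseteq[0,1]^k$, $\gamma_{t,n}^{m,j}(\mathbf X,A,B):=\frac1t\sum_{i=0}^{t-1}\mathbf 1\{(X_{in+1},\dots,X_{in+j})\in A\}\mathbf 1\{(X_{in+j+m},\dots,X_{(i+1)n})\in B\}$, $\widehat\beta_{t,n}^{\ell}(\mathbf X,m):=\max_{j}\frac12\sum_{A\in\Delta_{j,\ell}}\sum_{B\in\Delta_{j',\ell}}|\gamma_{t,n}^{m,j}(\mathbf X,A,B)-\mu_t(\mathbf X,A)\mu_t(\mathbf X,B)|$. Parameters: $(\ell_t),(n_t)$ non-decreasing unbounded positive integer sequences; $(M_t)$ increasing positive integers with $n_t>M_t$ (and $n_t>m$); $(\delta_t)$ positive with $\sum_t\delta_t<\infty$; $(\epsilon_t)$ positive with $\epsilon_t\to0$. With $\widetilde C_{m,\ell,n}:=m\cdot2^{2^{2n\ell+1}+2^{m\ell+1}+2}$, let $\widetilde\tau_t:=\lceil\widetilde C_{m,\ell_t,n_t}/(m\epsilon_t^2\delta_t)\rceil$, $\widetilde\kappa_t:=\lceil\widetilde C_{M_t,\ell_t,n_t}/(\epsilon_t^2\delta_t)\rceil$, $\widehat\beta_t(\mathbf X,m):=\widehat\beta_{\widetilde\tau_t,n_t}^{\ell_t}(\mathbf X,m)$ and $\widetilde\theta_t(\mathbf X):=\sum_{m=1}^{M_t}\widehat\beta_{\widetilde\kappa_t,n_t}^{\ell_t}(\mathbf X,m)$. *)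

theory Defs
  imports "HOL-Probability.Probability"
begin

text \<open>Conventions: the process is the coordinate process on the sample space of
  functions omega :: nat => real, with values in [0,1]; the paper's X_t (t >= 1)
  is the coordinate omega (t - 1).\<close>

definition seq_space :: "(nat \<Rightarrow> real) measure" where
  "seq_space = PiM UNIV (\<lambda>_. restrict_space borel {0..1::real})"

text \<open>sigma(X_t : t in I), with I a set of 0-based coordinate indices\<close>
definition gen_sa :: "(nat \<Rightarrow> real) measure \<Rightarrow> nat set \<Rightarrow> (nat \<Rightarrow> real) set set" where
  "gen_sa \<mu> I = sigma_sets (space \<mu>)
      (\<Union>t\<in>I. {(\<lambda>\<omega>. \<omega> t) -` A \<inter> space \<mu> | A. A \<in> sets borel})"

definition restr_meas :: "'a measure \<Rightarrow> 'a set set \<Rightarrow> 'a measure" where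
  "restr_meas \<mu> U = measure_of (space \<mu>) U (emeasure \<mu>)"

definition beta_sa :: "'a measure \<Rightarrow> 'a set set \<Rightarrow> 'a set set \<Rightarrow> real" where
  "beta_sa \<mu> U V =
     (SUP W\<in>sets (restr_meas \<mu> U \<Otimes>\<^sub>M restr_meas \<mu> V).
        \<bar>measure (distr \<mu> (restr_meas \<mu> U \<Otimes>\<^sub>M restr_meas \<mu> V) (\<lambda>\<omega>. (\<omega>, \<omega>))) W
         - measure (restr_meas \<mu> U \<Otimes>\<^sub>M restr_meas \<mu> V) W\<bar>)"

text \<open>beta(m) = sup_j beta(sigma(X_1..X_j), sigma(X_t : t >= j+m)), in 0-based coordinates\<close>
definition beta_coef :: "(nat \<Rightarrow> real) measure \<Rightarrow> nat \<Rightarrow> real" where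
  "beta_coef \<mu> m = (SUP j\<in>{1..}. beta_sa \<mu> (gen_sa \<mu> {0..<j}) (gen_sa \<mu> {j + m - 1..}))"

definition dyad :: "nat \<Rightarrow> nat \<Rightarrow> real set" where
  "dyad l i = (if i = 2 ^ l - 1 then {real i / 2 ^ l .. real (i + 1) / 2 ^ l}
               else {real i / 2 ^ l ..< real (i + 1) / 2 ^ l})"

definition cube :: "nat \<Rightarrow> nat list \<Rightarrow> real list set" where
  "cube l is = {xs. length xs = length is \<and> (\<forall>r<length is. xs ! r \<in> dyad l (is ! r))}"

definition dcubes :: "nat \<Rightarrow> nat \<Rightarrow> real list set set" where
  "dcubes k l = cube l ` {is. length is = k \<and> set is \<subseteq> {0..<2 ^ l}}"

definition emp_mu :: "nat \<Rightarrow> nat \<Rightarrow> (nat \<Rightarrow> real) \<Rightarrow> real list set \<Rightarrow> real" where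
  "emp_mu t k \<omega> B = (\<Sum>i<t. (indicator B (map \<omega> [i * k..<(i + 1) * k]) :: real)) / real t"

definition emp_gamma :: "nat \<Rightarrow> nat \<Rightarrow> nat \<Rightarrow> nat \<Rightarrow> (nat \<Rightarrow> real) \<Rightarrow> real list set \<Rightarrow> real list set \<Rightarrow> real" where
  "emp_gamma t n m j \<omega> A B =
     (\<Sum>i<t. (indicator A (map \<omega> [i * n..<i * n + j]) :: real)
            * indicator B (map \<omega> [i * n + j + m - 1..<(i + 1) * n])) / real t"

definition beta_hat :: "nat \<Rightarrow> nat \<Rightarrow> nat \<Rightarrow> (nat \<Rightarrow> real) \<Rightarrow> nat \<Rightarrow> real" where
  "beta_hat l t n \<omega> m = Max ((\<lambda>j. let j' = n - m - j + 1 in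
      (1 / 2) * (\<Sum>A\<in>dcubes j l. \<Sum>B\<in>dcubes j' l.
          \<bar>emp_gamma t n m j \<omega> A B - emp_mu t j \<omega> A * emp_mu t j' \<omega> B\<bar>)) ` {1..n - m})"

definition Ctil :: "nat \<Rightarrow> nat \<Rightarrow> nat \<Rightarrow> real" where
  "Ctil m l n = real m * 2 ^ (2 ^ (2 * n * l + 1) + 2 ^ (m * l + 1) + 2)"

end

theory Submission
  imports Defs
begin

text \<open>For each split of a block of \<open>n\<close> coordinates into a past of length \<open>j\<close> and a future
  after a gap of \<open>m - 1\<close>, \<open>beta_hat\<close> compares empirical frequencies of pairs of dyadic cubes
  with products of empirical marginal frequencies. Its population counterpart \<open>dyadic_beta l n m\<close>
  is the total variation distance between the joint and the product law on the finite
  partition into dyadic cells, hence at most \<open>\<beta>(m)\<close>; since the cells of growing level and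
  length generate the relevant \<sigma>-algebras, it converges to \<open>\<beta>(m)\<close>.
  Each empirical frequency is an average over disjoint blocks of a stationary sequence whose
  covariances at lag \<open>k\<close> are bounded by \<open>\<beta>\<close> at a gap proportional to \<open>k\<close>; summability of
  \<open>\<beta>\<close> gives a Chebyshev bound of order \<open>1/\<tau>\<close>. A union bound over the at most
  \<open>3 n 2^(l n)\<close> frequencies and the choice of sample sizes make the exceptional probabilities
  summable, and Borel--Cantelli yields almost sure convergence.\<close>

section \<open>Approximation in generated \<sigma>-algebras\<close>

definition approximable :: "'a measure \<Rightarrow> 'a measure \<Rightarrow> 'a set set \<Rightarrow> 'a set \<Rightarrow> bool" where
  "approximable M N F W \<longleftrightarrow>
     (\<forall>e>0. \<exists>R\<in>F. measure M (sym_diff W R) + measure N (sym_diff W R) < e)"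

lemma approximable_Compl:
  assumes "algebra (space M) F" "approximable M N F W" "W \<subseteq> space M"
  shows "approximable M N F (space M - W)"
  unfolding approximable_def
proof (intro allI impI)
  interpret F: algebra "space M" F by fact
  fix e :: real assume "e > 0"
  then obtain R where R: "R \<in> F" "measure M (sym_diff W R) + measure N (sym_diff W R) < e"
    using assms(2) unfolding approximable_def by blast
  have "sym_diff (space M - W) (space M - R) = sym_diff W R"
    using assms(3) F.sets_into_space[OF R(1)] by blast
  then show "\<exists>R\<in>F. measure M (sym_diff (space M - W) R) + measure N (sym_diff (space M - W) R) < e"
    using R by (intro bexI[of _ "space M - R"]) auto
qed

lemma (in finite_measure) tendsto_measure_UN_diff_UN_lessThan:
  fixes A :: "nat \<Rightarrow> 'a set"
  assumes "range A \<subseteq> sets M"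
  shows "(\<lambda>k. measure M ((\<Union>i. A i) - (\<Union>i<k. A i))) \<longlonglongrightarrow> 0"
proof -
  have inc: "incseq (\<lambda>k. \<Union>i<k. A i)"
    by (intro monoI UN_mono) auto
  have "(\<Union>k. \<Union>i<k. A i) = (\<Union>i. A i)" by blast
  moreover have "range (\<lambda>k. \<Union>i<k. A i) \<subseteq> sets M" using assms by auto
  ultimately have "(\<lambda>k. measure M (\<Union>i<k. A i)) \<longlonglongrightarrow> measure M (\<Union>i. A i)"
    using finite_Lim_measure_incseq[OF _ inc] by simp
  then have "(\<lambda>k. measure M (\<Union>i. A i) - measure M (\<Union>i<k. A i)) \<longlonglongrightarrow> measure M (\<Union>i. A i) - measure M (\<Union>i. A i)"
    by (intro tendsto_diff tendsto_const)
  moreover have "measure M ((\<Union>i. A i) - (\<Union>i<k. A i)) = measure M (\<Union>i. A i) - measure M (\<Union>i<k. A i)" for k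
    using assms by (intro finite_measure_Diff) auto
  ultimately show ?thesis by simp
qed

lemma (in finite_measure) measure_sym_diff_UN_le:
  fixes A R :: "nat \<Rightarrow> 'a set"
  assumes "range A \<subseteq> sets M" "range R \<subseteq> sets M"
  shows "measure M (sym_diff (\<Union>i. A i) (\<Union>i<k. R i))
           \<le> measure M ((\<Union>i. A i) - (\<Union>i<k. A i)) + (\<Sum>i<k. measure M (sym_diff (A i) (R i)))"
proof -
  have "measure M (sym_diff (\<Union>i. A i) (\<Union>i<k. R i)) \<le> measure M (((\<Union>i. A i) - (\<Union>i<k. A i)) \<union> (\<Union>i<k. sym_diff (A i) (R i)))"
    using assms by (intro finite_measure_mono) auto
  also have "\<dots> \<le> measure M ((\<Union>i. A i) - (\<Union>i<k. A i)) + measure M (\<Union>i<k. sym_diff (A i) (R i))"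
    using assms by (intro measure_Un_le) auto
  also have "measure M (\<Union>i<k. sym_diff (A i) (R i)) \<le> (\<Sum>i<k. measure M (sym_diff (A i) (R i)))"
    using assms by (intro measure_UNION_le) auto
  finally show ?thesis by simp
qed

lemma approximable_countable_UN:
  fixes A :: "nat \<Rightarrow> 'a set"
  assumes "finite_measure M" "finite_measure N" "sets N = sets M"
    and F: "algebra (space M) F" "F \<subseteq> sets M"
    and A: "range A \<subseteq> sets M" "\<And>i. approximable M N F (A i)"
  shows "approximable M N F (\<Union>i. A i)"
  unfolding approximable_def
proof (intro allI impI)
  interpret M: finite_measure M by fact
  interpret N: finite_measure N by fact
  interpret F: algebra "space M" F by fact
  fix e :: real assume e: "e > 0"
  have "eventually (\<lambda>k. measure M ((\<Union>i. A i) - (\<Union>i<k. A i)) < e / 4) sequentially"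
    using order_tendstoD(2)[OF M.tendsto_measure_UN_diff_UN_lessThan[OF A(1)], of "e / 4"] e by simp
  moreover have "eventually (\<lambda>k. measure N ((\<Union>i. A i) - (\<Union>i<k. A i)) < e / 4) sequentially"
    using order_tendstoD(2)[OF N.tendsto_measure_UN_diff_UN_lessThan, of A "e / 4"] A(1) e \<open>sets N = sets M\<close>
    by simp
  ultimately obtain k where
    tailM: "measure M ((\<Union>i. A i) - (\<Union>i<k. A i)) < e / 4" and
    tailN: "measure N ((\<Union>i. A i) - (\<Union>i<k. A i)) < e / 4"
    by (metis (no_types, lifting) eventually_conj_iff eventually_sequentially order_refl)
  have "\<forall>i. \<exists>R\<in>F. measure M (sym_diff (A i) R) + measure N (sym_diff (A i) R) < e / (4 * (real k + 1))"
    using A(2) e unfolding approximable_def by (simp add: add_pos_pos)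
  then obtain R where R: "\<And>i. R i \<in> F"
    "\<And>i. measure M (sym_diff (A i) (R i)) + measure N (sym_diff (A i) (R i)) < e / (4 * (real k + 1))"
    by metis
  have RM: "range R \<subseteq> sets M" "range R \<subseteq> sets N" using R(1) F(2) \<open>sets N = sets M\<close> by auto
  have "(\<Sum>i<k. measure M (sym_diff (A i) (R i)) + measure N (sym_diff (A i) (R i)))
          \<le> real k * (e / (4 * (real k + 1)))"
    using sum_mono[of "{..<k}" _ "\<lambda>_. e / (4 * (real k + 1))"] R(2) by (simp add: less_imp_le)
  also have "\<dots> \<le> e / 4" using e by (simp add: field_simps)
  finally have errR: "(\<Sum>i<k. measure M (sym_diff (A i) (R i))) + (\<Sum>i<k. measure N (sym_diff (A i) (R i))) \<le> e / 4"
    by (simp add: sum.distrib)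
  then show "\<exists>R'\<in>F. measure M (sym_diff (\<Union>i. A i) R') + measure N (sym_diff (\<Union>i. A i) R') < e"
  proof (intro bexI[of _ "\<Union>i<k. R i"])
    have AN: "range A \<subseteq> sets N" using A(1) \<open>sets N = sets M\<close> by simp
    show "measure M (sym_diff (\<Union>i. A i) (\<Union>i<k. R i)) + measure N (sym_diff (\<Union>i. A i) (\<Union>i<k. R i)) < e"
      using M.measure_sym_diff_UN_le[OF A(1) RM(1), of k] N.measure_sym_diff_UN_le[OF AN RM(2), of k]
        tailM tailN errR e by linarith
    show "(\<Union>i<k. R i) \<in> F" using R(1) by (intro F.finite_UN) auto
  qed
qed

lemma approximable_sigma_sets:
  assumes "finite_measure M" "finite_measure N" "sets N = sets M"
    and F: "algebra (space M) F" "F \<subseteq> sets M"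
    and G: "G \<subseteq> sets M" "\<And>g. g \<in> G \<Longrightarrow> approximable M N F g"
    and W: "W \<in> sigma_sets (space M) G"
  shows "approximable M N F W"
  using W
proof (induction rule: sigma_sets.induct)
  case (Basic a) then show ?case using G by auto
next
  case Empty
  show ?case
    unfolding approximable_def using F(1) unfolding algebra_iff_Un by (intro allI impI bexI[of _ "{}"]) auto
next
  case (Compl a)
  then show ?case
    using approximable_Compl[OF F(1)] sigma_sets_into_sp[OF _ Compl.hyps] G(1) sets.sets_into_space
    by blast
next
  case (Union A)
  then show ?case
    using approximable_countable_UN[OF assms(1-3) F] sets.sigma_sets_subset[OF G(1)] by blast
qed

section \<open>Dyadic grid\<close>

definition dyadic_index :: "nat \<Rightarrow> real \<Rightarrow> nat" where
  "dyadic_index l x = min (nat \<lfloor>x * 2 ^ l\<rfloor>) (2 ^ l - 1)"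

definition dyadic_words :: "nat \<Rightarrow> nat \<Rightarrow> nat list set" where
  "dyadic_words k l = {is. set is \<subseteq> {0..<2 ^ l} \<and> length is = k}"

lemma dyadic_index_less: "dyadic_index l x < 2 ^ l"
  unfolding dyadic_index_def by (rule le_less_trans[OF min.cobounded2]) simp

lemma mem_dyad_iff:
  assumes x: "0 \<le> x" "x \<le> 1" and i: "i < 2 ^ l"
  shows "x \<in> dyad l i \<longleftrightarrow> dyadic_index l x = i"
proof -
  have fl: "\<lfloor>x * 2 ^ l\<rfloor> \<ge> 0" using x by simp
  show ?thesis
  proof (cases "i = 2 ^ l - 1")
    case True
    have "x \<in> dyad l i \<longleftrightarrow> real i \<le> x * 2 ^ l"
      using True x unfolding dyad_def by (simp add: of_nat_diff field_simps)
    also have "\<dots> \<longleftrightarrow> i \<le> nat \<lfloor>x * 2 ^ l\<rfloor>"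
      by (metis fl le_floor_iff le_nat_iff of_int_of_nat_eq)
    also have "\<dots> \<longleftrightarrow> dyadic_index l x = i" unfolding dyadic_index_def True by (auto simp: min_def)
    finally show ?thesis .
  next
    case False
    have "x \<in> dyad l i \<longleftrightarrow> real i \<le> x * 2 ^ l \<and> x * 2 ^ l < real i + 1"
      using False unfolding dyad_def by (simp add: field_simps)
    also have "\<dots> \<longleftrightarrow> \<lfloor>x * 2 ^ l\<rfloor> = int i" by (simp add: floor_eq_iff)
    also have "\<dots> \<longleftrightarrow> nat \<lfloor>x * 2 ^ l\<rfloor> = i" using fl by auto
    also have "\<dots> \<longleftrightarrow> dyadic_index l x = i" unfolding dyadic_index_def using False i by (auto simp: min_def)
    finally show ?thesis .
  qed
qed

lemma dyad_borel: "dyad l i \<in> sets borel"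
  unfolding dyad_def by auto

lemma nat_floor_mult_power2_div: "nat \<lfloor>y * 2 ^ d\<rfloor> div 2 ^ d = nat \<lfloor>y :: real\<rfloor>"
proof -
  have "\<lfloor>y * 2 ^ d / real_of_int (2 ^ d)\<rfloor> = \<lfloor>y * 2 ^ d\<rfloor> div 2 ^ d"
    by (rule floor_divide_real_eq_div) simp
  then have "\<lfloor>y\<rfloor> = \<lfloor>y * 2 ^ d\<rfloor> div 2 ^ d" by simp
  moreover have "nat (\<lfloor>y * 2 ^ d\<rfloor> div 2 ^ d) = nat \<lfloor>y * 2 ^ d\<rfloor> div nat (2 ^ d)"
    by (rule nat_div_distrib') simp
  ultimately show ?thesis by (simp add: nat_power_eq)
qed

lemma pred_mult_div: "0 < q \<Longrightarrow> ((a::nat) * q - 1) div q = a - 1"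
  by (intro div_nat_eqI; cases a; cases q; simp)

lemma dyadic_index_coarsen:
  assumes "l \<le> l'"
  shows "dyadic_index l x = dyadic_index l' x div 2 ^ (l' - l)"
proof -
  define d where "d = l' - l"
  have l': "l' = l + d" using assms d_def by simp
  have floor_div: "nat \<lfloor>x * 2 ^ l'\<rfloor> div 2 ^ d = nat \<lfloor>x * 2 ^ l\<rfloor>"
    unfolding l' by (simp add: power_add mult.assoc[symmetric] nat_floor_mult_power2_div)
  have top_div: "(2 ^ l' - 1) div 2 ^ d = (2::nat) ^ l - 1"
    unfolding l' power_add by (rule pred_mult_div) simp
  have "dyadic_index l' x div 2 ^ d = min (nat \<lfloor>x * 2 ^ l'\<rfloor> div 2 ^ d) ((2 ^ l' - 1) div 2 ^ d)"
    unfolding dyadic_index_def using min_of_mono[of "\<lambda>y::nat. y div 2 ^ d"] by (simp add: mono_def div_le_mono)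
  then show ?thesis using floor_div top_div unfolding dyadic_index_def d_def by simp
qed

lemma dyadic_index_measurable[measurable]: "dyadic_index l \<in> measurable borel (count_space UNIV)"
proof -
  have "(\<lambda>x::real. \<lfloor>x * 2 ^ l\<rfloor>) \<in> measurable borel (count_space UNIV)"
    by (rule measurable_compose[OF _ measurable_real_floor]) simp
  then show ?thesis unfolding dyadic_index_def by (rule measurable_compose) simp
qed

lemma dyadic_index_bounds:
  assumes "0 \<le> x" "x \<le> 1"
  shows "real (dyadic_index l x) \<le> x * 2 ^ l" "x * 2 ^ l \<le> real (dyadic_index l x) + 1"
proof -
  have fl: "\<lfloor>x * 2 ^ l\<rfloor> \<ge> 0" using assms by simp
  have "real (dyadic_index l x) \<le> real (nat \<lfloor>x * 2 ^ l\<rfloor>)"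
    unfolding dyadic_index_def of_nat_le_iff by simp
  then show "real (dyadic_index l x) \<le> x * 2 ^ l" using fl by linarith
  have "x * 2 ^ l < real (nat \<lfloor>x * 2 ^ l\<rfloor>) + 1" using fl by linarith
  moreover have "x * 2 ^ l \<le> 2 ^ l" using assms by simp
  moreover have "real ((2::nat) ^ l - 1) = 2 ^ l - 1" by (simp add: of_nat_diff)
  ultimately show "x * 2 ^ l \<le> real (dyadic_index l x) + 1"
    unfolding dyadic_index_def by (auto simp: min_def not_le)
qed

lemma finite_dyadic_words: "finite (dyadic_words k l)"
  unfolding dyadic_words_def by (rule finite_lists_length_eq) simp

lemma card_dyadic_words: "card (dyadic_words k l) = 2 ^ (l * k)"
  unfolding dyadic_words_def by (simp add: card_lists_length_eq power_mult)

lemma mem_cube_iff: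
  assumes "set xs \<subseteq> {0..1}" "is \<in> dyadic_words k l"
  shows "xs \<in> cube l is \<longleftrightarrow> map (dyadic_index l) xs = is"
proof -
  have "xs \<in> cube l is \<longleftrightarrow> length xs = length is \<and> (\<forall>r<length is. dyadic_index l (xs ! r) = is ! r)"
    unfolding cube_def using assms mem_dyad_iff unfolding dyadic_words_def by (auto simp: subset_iff)
  also have "\<dots> \<longleftrightarrow> map (dyadic_index l) xs = is" by (auto simp: list_eq_iff_nth_eq)
  finally show ?thesis .
qed

lemma inj_on_cube: "inj_on (cube l) (dyadic_words k l)"
proof
  fix a b assume ab: "a \<in> dyadic_words k l" "b \<in> dyadic_words k l" "cube l a = cube l b"
  define x where "x = map (\<lambda>i. real i / 2 ^ l) a"
  have x01: "set x \<subseteq> {0..1}"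
    using ab(1) unfolding x_def dyadic_words_def by (auto simp: less_imp_le divide_le_eq)
  have "dyadic_index l (real i / 2 ^ l) = i" if "i < 2 ^ l" for i
    using that unfolding dyadic_index_def by (simp add: min_def)
  then have "map (dyadic_index l) x = a"
    using ab(1) unfolding x_def dyadic_words_def by (auto simp: map_idI subset_iff)
  then have "x \<in> cube l b" using mem_cube_iff[OF x01 ab(1)] ab(3) by simp
  then show "a = b" using mem_cube_iff[OF x01 ab(2)] \<open>map (dyadic_index l) x = a\<close> by simp
qed

lemma sum_dcubes: "(\<Sum>A\<in>dcubes k l. f A) = (\<Sum>is\<in>dyadic_words k l. f (cube l is))"
proof -
  have "dcubes k l = cube l ` dyadic_words k l"
    unfolding dcubes_def dyadic_words_def by (auto intro!: image_cong)
  then show ?thesis by (simp add: sum.reindex[OF inj_on_cube])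
qed

section \<open>Discrepancy on a finite partition\<close>

lemma sum_max_0_eq_half_sum_abs:
  fixes d :: "'k \<Rightarrow> real"
  assumes "(\<Sum>k\<in>K. d k) = 0"
  shows "(\<Sum>k\<in>K. max (d k) 0) = (1 / 2) * (\<Sum>k\<in>K. \<bar>d k\<bar>)"
proof -
  have "(\<Sum>k\<in>K. \<bar>d k\<bar>) = (\<Sum>k\<in>K. 2 * max (d k) 0 - d k)"
    by (intro sum.cong) (auto simp: max_def)
  then show ?thesis using assms by (simp add: sum_subtractf sum_distrib_left[symmetric])
qed

lemma sum_subset_le_half_sum_abs:
  fixes d :: "'k \<Rightarrow> real"
  assumes "finite K" "(\<Sum>k\<in>K. d k) = 0" "K' \<subseteq> K"
  shows "(\<Sum>k\<in>K'. d k) \<le> (1 / 2) * (\<Sum>k\<in>K. \<bar>d k\<bar>)"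
proof -
  have "(\<Sum>k\<in>K'. d k) \<le> (\<Sum>k\<in>K'. max (d k) 0)" by (intro sum_mono) simp
  also have "\<dots> \<le> (\<Sum>k\<in>K. max (d k) 0)" using assms by (intro sum_mono2) auto
  finally show ?thesis using sum_max_0_eq_half_sum_abs[OF assms(2)] by simp
qed

lemma abs_sum_subset_le_half_sum_abs:
  fixes d :: "'k \<Rightarrow> real"
  assumes "finite K" "(\<Sum>k\<in>K. d k) = 0" "K' \<subseteq> K"
  shows "\<bar>\<Sum>k\<in>K'. d k\<bar> \<le> (1 / 2) * (\<Sum>k\<in>K. \<bar>d k\<bar>)"
  using sum_subset_le_half_sum_abs[OF assms] sum_subset_le_half_sum_abs[of K "\<lambda>k. - d k" K'] assms
  by (simp add: sum_negf abs_le_iff)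

locale finite_partition_pair =
  fixes P Q :: "'a measure" and K :: "'k set" and C :: "'k \<Rightarrow> 'a set"
  assumes prob_space_P: "prob_space P" and prob_space_Q: "prob_space Q"
    and sets_Q: "sets Q = sets P" and finite_K: "finite K"
    and sets_C: "\<And>k. k \<in> K \<Longrightarrow> C k \<in> sets P"
    and disjoint_C: "disjoint_family_on C K" and UN_C: "(\<Union>k\<in>K. C k) = space P"
begin

interpretation P: prob_space P by (rule prob_space_P)
interpretation Q: prob_space Q by (rule prob_space_Q)

lemma measure_diff_UN:
  assumes "K' \<subseteq> K"
  shows "measure P (\<Union>k\<in>K'. C k) - measure Q (\<Union>k\<in>K'. C k)
           = (\<Sum>k\<in>K'. measure P (C k) - measure Q (C k))"
proof -
  have fin: "finite K'" and disj: "disjoint_family_on C K'"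
    using assms finite_K disjoint_C by (auto intro: finite_subset disjoint_family_on_mono)
  have "measure P (\<Union>k\<in>K'. C k) = (\<Sum>k\<in>K'. measure P (C k))"
    using assms sets_C by (intro P.finite_measure_finite_Union[OF fin _ disj]) auto
  moreover have "measure Q (\<Union>k\<in>K'. C k) = (\<Sum>k\<in>K'. measure Q (C k))"
    using assms sets_C sets_Q by (intro Q.finite_measure_finite_Union[OF fin _ disj]) auto
  ultimately show ?thesis by (simp add: sum_subtractf)
qed

lemma sum_measure_diff_eq_0: "(\<Sum>k\<in>K. measure P (C k) - measure Q (C k)) = 0"
proof -
  have "measure Q (space P) = 1" using Q.prob_space sets_eq_imp_space_eq[OF sets_Q] by simp
  then show ?thesis using measure_diff_UN[of K] UN_C by (simp add: P.prob_space)
qed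

lemma abs_measure_diff_UN_le:
  "K' \<subseteq> K \<Longrightarrow> \<bar>measure P (\<Union>k\<in>K'. C k) - measure Q (\<Union>k\<in>K'. C k)\<bar>
     \<le> (1 / 2) * (\<Sum>k\<in>K. \<bar>measure P (C k) - measure Q (C k)\<bar>)"
  using measure_diff_UN abs_sum_subset_le_half_sum_abs[OF finite_K sum_measure_diff_eq_0] by simp

lemma measure_diff_UN_positive_cells:
  defines "Kpos \<equiv> {k\<in>K. measure P (C k) - measure Q (C k) > 0}"
  shows "measure P (\<Union>k\<in>Kpos. C k) - measure Q (\<Union>k\<in>Kpos. C k)
           = (1 / 2) * (\<Sum>k\<in>K. \<bar>measure P (C k) - measure Q (C k)\<bar>)"
proof -
  have "(\<Sum>k\<in>Kpos. measure P (C k) - measure Q (C k)) = (\<Sum>k\<in>K. max (measure P (C k) - measure Q (C k)) 0)"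
    unfolding Kpos_def using finite_K by (auto simp: sum.inter_filter max_def intro!: sum.cong)
  then show ?thesis
    using measure_diff_UN[of "Kpos"] sum_max_0_eq_half_sum_abs[OF sum_measure_diff_eq_0]
    unfolding Kpos_def by simp
qed

end

section \<open>Stationary processes and \<beta>-mixing coefficients\<close>

definition shift :: "nat \<Rightarrow> (nat \<Rightarrow> 'a) \<Rightarrow> nat \<Rightarrow> 'a" where
  "shift k \<omega> = (\<lambda>t. \<omega> (t + k))"

lemma shift_shift: "shift a (shift b \<omega>) = shift (a + b) \<omega>"
  unfolding shift_def by (simp add: algebra_simps)

lemma space_seq_space: "space seq_space = {\<omega>. \<forall>i. \<omega> i \<in> {0..1}}"
  unfolding seq_space_def space_PiM by (auto simp: PiE_def Pi_def)

locale stationary_process =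
  fixes \<mu> :: "(nat \<Rightarrow> real) measure"
  assumes prob_space_\<mu>: "prob_space \<mu>" and sets_\<mu>: "sets \<mu> = sets seq_space"
    and stationary: "distr \<mu> \<mu> (\<lambda>\<omega> t. \<omega> (Suc t)) = \<mu>"
begin

sublocale prob_space \<mu> by (rule prob_space_\<mu>)

lemma space_\<mu>: "space \<mu> = {\<omega>. \<forall>i. \<omega> i \<in> {0..1}}"
  using sets_eq_imp_space_eq[OF sets_\<mu>] space_seq_space by simp

lemma coordinate_measurable_unit:
  "(\<lambda>\<omega>. \<omega> t) \<in> measurable \<mu> (restrict_space borel {0..1::real})"
proof -
  have "(\<lambda>\<omega>. \<omega> t) \<in> measurable seq_space (restrict_space borel {0..1::real})"
    unfolding seq_space_def by (rule measurable_component_singleton) simp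
  then show ?thesis by (subst measurable_cong_sets[OF sets_\<mu> refl])
qed

lemma coordinate_measurable[measurable]: "(\<lambda>\<omega>. \<omega> t) \<in> borel_measurable \<mu>"
  using measurable_compose[OF coordinate_measurable_unit measurable_restrict_space1[OF measurable_ident]]
  by (simp add: comp_def)

lemma shift_in_space: "\<omega> \<in> space \<mu> \<Longrightarrow> shift k \<omega> \<in> space \<mu>"
  unfolding space_\<mu> shift_def by auto

lemma shift_measurable[measurable]: "shift k \<in> measurable \<mu> \<mu>"
proof -
  have "shift k \<in> measurable \<mu> seq_space"
    unfolding seq_space_def shift_def
    by (rule measurable_PiM_single') (auto simp: space_\<mu> intro: coordinate_measurable_unit)
  then show ?thesis by (subst measurable_cong_sets[OF refl sets_\<mu>])
qed

lemma distr_shift: "distr \<mu> \<mu> (shift k) = \<mu>"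
proof (induction k)
  case 0
  show ?case unfolding shift_def by (simp add: distr_id2 sets_\<mu>)
next
  case (Suc k)
  have comp: "shift (Suc k) = (\<lambda>\<omega> t. \<omega> (Suc t)) \<circ> shift k" unfolding shift_def by auto
  have "(\<lambda>\<omega> t. \<omega> (Suc t)) \<in> measurable \<mu> \<mu>"
    using shift_measurable[of 1] unfolding shift_def by simp
  then have "distr \<mu> \<mu> (shift (Suc k)) = distr (distr \<mu> \<mu> (shift k)) \<mu> (\<lambda>\<omega> t. \<omega> (Suc t))"
    unfolding comp by (rule distr_distr[symmetric, OF _ shift_measurable])
  then show ?case using Suc stationary by simp
qed

lemma prob_shift_vimage: "E \<in> sets \<mu> \<Longrightarrow> prob (shift k -` E \<inter> space \<mu>) = prob E"
  using measure_distr[OF shift_measurable, of E k] distr_shift[of k] by simp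

lemma gen_sa_subset_sets: "gen_sa \<mu> I \<subseteq> sets \<mu>"
  unfolding gen_sa_def by (rule sets.sigma_sets_subset) auto

lemma gen_sa_mono: "I \<subseteq> J \<Longrightarrow> gen_sa \<mu> I \<subseteq> gen_sa \<mu> J"
  unfolding gen_sa_def by (rule sigma_sets_mono') blast

lemma sigma_algebra_gen_sa: "sigma_algebra (space \<mu>) (gen_sa \<mu> I)"
  unfolding gen_sa_def by (rule sigma_algebra_sigma_sets) auto

lemma coordinate_vimage_in_gen_sa:
  "t \<in> I \<Longrightarrow> A \<in> sets borel \<Longrightarrow> (\<lambda>\<omega>. \<omega> t) -` A \<inter> space \<mu> \<in> gen_sa \<mu> I"
  unfolding gen_sa_def by (rule sigma_sets.Basic) blast

lemma space_in_gen_sa: "space \<mu> \<in> gen_sa \<mu> I"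
  unfolding gen_sa_def by (rule sigma_sets_top)

lemma shift_vimage_in_gen_sa:
  assumes "E \<in> gen_sa \<mu> I"
  shows "shift k -` E \<inter> space \<mu> \<in> gen_sa \<mu> ((\<lambda>t. t + k) ` I)"
  using assms unfolding gen_sa_def
proof (induction rule: sigma_sets.induct)
  case (Basic a)
  then obtain t A where tA: "t \<in> I" "A \<in> sets borel" "a = (\<lambda>\<omega>. \<omega> t) -` A \<inter> space \<mu>" by blast
  then have "shift k -` a \<inter> space \<mu> = (\<lambda>\<omega>. \<omega> (t + k)) -` A \<inter> space \<mu>"
    using shift_in_space by (auto simp: shift_def)
  then show ?case using tA by (intro sigma_sets.Basic) blast
next
  case Empty then show ?case by (simp add: sigma_sets.Empty)
next
  case (Compl a)
  have "shift k -` (space \<mu> - a) \<inter> space \<mu> = space \<mu> - (shift k -` a \<inter> space \<mu>)"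
    using shift_in_space by auto
  then show ?case using Compl by (simp add: sigma_sets.Compl)
next
  case (Union A)
  have "shift k -` (\<Union>i. A i) \<inter> space \<mu> = (\<Union>i. shift k -` A i \<inter> space \<mu>)" by auto
  then show ?case by (simp only:) (rule sigma_sets.Union[OF Union.IH])
qed

abbreviation restr :: "nat set \<Rightarrow> (nat \<Rightarrow> real) measure" where
  "restr I \<equiv> restr_meas \<mu> (gen_sa \<mu> I)"

abbreviation product_law :: "nat set \<Rightarrow> nat set \<Rightarrow> ((nat \<Rightarrow> real) \<times> (nat \<Rightarrow> real)) measure" where
  "product_law I J \<equiv> restr I \<Otimes>\<^sub>M restr J"

abbreviation joint_law :: "nat set \<Rightarrow> nat set \<Rightarrow> ((nat \<Rightarrow> real) \<times> (nat \<Rightarrow> real)) measure" where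
  "joint_law I J \<equiv> distr \<mu> (product_law I J) (\<lambda>\<omega>. (\<omega>, \<omega>))"

lemma restr_eq_restr_to_subalg: "restr I = restr_to_subalg \<mu> (sigma (space \<mu>) (gen_sa \<mu> I))"
  and subalgebra_gen_sa: "subalgebra \<mu> (sigma (space \<mu>) (gen_sa \<mu> I))"
proof -
  have sets: "sets (sigma (space \<mu>) (gen_sa \<mu> I)) = gen_sa \<mu> I"
    using sigma_algebra_gen_sa by (simp add: sigma_algebra.sets_measure_of_eq)
  then show "restr I = restr_to_subalg \<mu> (sigma (space \<mu>) (gen_sa \<mu> I))"
    unfolding restr_meas_def restr_to_subalg_def by simp
  show "subalgebra \<mu> (sigma (space \<mu>) (gen_sa \<mu> I))"
    unfolding subalgebra_def using sets gen_sa_subset_sets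
    by (simp add: sigma_algebra.space_measure_of_eq sigma_algebra_gen_sa)
qed

lemma sets_restr[simp]: "sets (restr I) = gen_sa \<mu> I"
  using sets_restr_to_subalg[OF subalgebra_gen_sa] sigma_algebra_gen_sa
  by (simp add: restr_eq_restr_to_subalg sigma_algebra.sets_measure_of_eq)

lemma space_restr[simp]: "space (restr I) = space \<mu>"
  by (simp add: restr_eq_restr_to_subalg space_restr_to_subalg)

lemma emeasure_restr: "A \<in> gen_sa \<mu> I \<Longrightarrow> emeasure (restr I) A = emeasure \<mu> A"
  using emeasure_restr_to_subalg[OF subalgebra_gen_sa] sigma_algebra_gen_sa
  by (simp add: restr_eq_restr_to_subalg sigma_algebra.sets_measure_of_eq)

lemma pair_prob_space_restr: "pair_prob_space (restr I) (restr J)"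
proof -
  interpret I: prob_space "restr I"
    unfolding restr_eq_restr_to_subalg by (rule prob_space_restr_to_subalg[OF subalgebra_gen_sa prob_space_\<mu>])
  interpret J: prob_space "restr J"
    unfolding restr_eq_restr_to_subalg by (rule prob_space_restr_to_subalg[OF subalgebra_gen_sa prob_space_\<mu>])
  show ?thesis by unfold_locales
qed

lemma prob_space_product_law: "prob_space (product_law I J)"
proof -
  interpret pair_prob_space "restr I" "restr J" by (rule pair_prob_space_restr)
  show ?thesis by (rule P.prob_space_axioms)
qed

lemma diagonal_measurable: "(\<lambda>\<omega>. (\<omega>, \<omega>)) \<in> measurable \<mu> (product_law I J)"
proof -
  have id: "(\<lambda>\<omega>. \<omega>) \<in> measurable \<mu> (restr K)" for K
    unfolding measurable_def using gen_sa_subset_sets sets.sets_into_space by auto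
  show ?thesis by (rule measurable_Pair[OF id id])
qed

lemma prob_space_joint_law: "prob_space (joint_law I J)"
  by (rule prob_space_distr[OF diagonal_measurable])

lemma measure_joint_law_Times:
  assumes "a \<in> gen_sa \<mu> I" "b \<in> gen_sa \<mu> J"
  shows "measure (joint_law I J) (a \<times> b) = prob (a \<inter> b)"
proof -
  have "measure (joint_law I J) (a \<times> b) = prob ((\<lambda>\<omega>. (\<omega>, \<omega>)) -` (a \<times> b) \<inter> space \<mu>)"
    using assms by (intro measure_distr[OF diagonal_measurable]) simp
  moreover have "(\<lambda>\<omega>. (\<omega>, \<omega>)) -` (a \<times> b) \<inter> space \<mu> = a \<inter> b"
    using assms gen_sa_subset_sets sets.sets_into_space by blast
  ultimately show ?thesis by simp
qed

lemma measure_product_law_Times: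
  assumes "a \<in> gen_sa \<mu> I" "b \<in> gen_sa \<mu> J"
  shows "measure (product_law I J) (a \<times> b) = prob a * prob b"
proof -
  interpret pair_prob_space "restr I" "restr J" by (rule pair_prob_space_restr)
  have "emeasure (product_law I J) (a \<times> b) = emeasure \<mu> a * emeasure \<mu> b"
    using assms by (simp add: M2.emeasure_pair_measure_Times emeasure_restr)
  then show ?thesis unfolding measure_def by (simp add: enn2real_mult)
qed

lemma abs_measure_joint_product_le_1:
  "\<bar>measure (joint_law I J) W - measure (product_law I J) W\<bar> \<le> 1"
proof -
  interpret D: prob_space "joint_law I J" by (rule prob_space_joint_law)
  interpret P: prob_space "product_law I J" by (rule prob_space_product_law)
  show ?thesis
    using D.prob_le_1[of W] P.prob_le_1[of W] measure_nonneg[of "joint_law I J" W] measure_nonneg[of "product_law I J" W]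
    unfolding abs_le_iff by linarith
qed

lemma bdd_above_abs_measure_joint_product:
  "bdd_above ((\<lambda>W. \<bar>measure (joint_law I J) W - measure (product_law I J) W\<bar>) ` X)"
  by (rule bdd_aboveI[of _ 1]) (auto intro: abs_measure_joint_product_le_1)

lemma abs_measure_joint_product_le_beta_sa:
  "W \<in> sets (product_law I J) \<Longrightarrow>
     \<bar>measure (joint_law I J) W - measure (product_law I J) W\<bar> \<le> beta_sa \<mu> (gen_sa \<mu> I) (gen_sa \<mu> J)"
  unfolding beta_sa_def by (rule cSUP_upper[OF _ bdd_above_abs_measure_joint_product])

lemma beta_sa_le_1: "beta_sa \<mu> (gen_sa \<mu> I) (gen_sa \<mu> J) \<le> 1"
  unfolding beta_sa_def by (rule cSUP_least) (auto intro: abs_measure_joint_product_le_1)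

lemma beta_sa_nonneg: "0 \<le> beta_sa \<mu> (gen_sa \<mu> I) (gen_sa \<mu> J)"
  using abs_measure_joint_product_le_beta_sa[of "{}" I J] by simp

lemma abs_prob_Int_minus_mult_le_beta_sa:
  assumes "a \<in> gen_sa \<mu> I" "b \<in> gen_sa \<mu> J"
  shows "\<bar>prob (a \<inter> b) - prob a * prob b\<bar> \<le> beta_sa \<mu> (gen_sa \<mu> I) (gen_sa \<mu> J)"
  using abs_measure_joint_product_le_beta_sa[of "a \<times> b" I J] assms
  by (simp add: measure_joint_law_Times measure_product_law_Times)

lemma beta_sa_approx:
  assumes "e > 0"
  shows "\<exists>W\<in>sets (product_law I J). beta_sa \<mu> (gen_sa \<mu> I) (gen_sa \<mu> J) - e
           < \<bar>measure (joint_law I J) W - measure (product_law I J) W\<bar>"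
proof -
  have "sets (product_law I J) \<noteq> {}" using sets.empty_sets by blast
  moreover have "beta_sa \<mu> (gen_sa \<mu> I) (gen_sa \<mu> J) - e < beta_sa \<mu> (gen_sa \<mu> I) (gen_sa \<mu> J)"
    using assms by simp
  ultimately show ?thesis
    unfolding beta_sa_def using less_cSUP_iff[OF _ bdd_above_abs_measure_joint_product] by blast
qed

lemma bdd_above_beta_sa_blocks:
  "bdd_above ((\<lambda>j. beta_sa \<mu> (gen_sa \<mu> {0..<j}) (gen_sa \<mu> {j + m - 1..})) ` {1..})"
  by (rule bdd_aboveI[of _ 1]) (auto intro: beta_sa_le_1)

lemma beta_sa_le_beta_coef:
  "j \<ge> 1 \<Longrightarrow> beta_sa \<mu> (gen_sa \<mu> {0..<j}) (gen_sa \<mu> {j + m - 1..}) \<le> beta_coef \<mu> m"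
  unfolding beta_coef_def by (rule cSUP_upper[OF _ bdd_above_beta_sa_blocks]) simp

lemma beta_coef_nonneg: "0 \<le> beta_coef \<mu> m"
  using beta_sa_le_beta_coef[of 1 m] beta_sa_nonneg[of "{0..<1}" "{m..}"] by simp

lemma beta_coef_approx:
  assumes "e > 0"
  shows "\<exists>j\<ge>1. beta_coef \<mu> m - e < beta_sa \<mu> (gen_sa \<mu> {0..<j}) (gen_sa \<mu> {j + m - 1..})"
proof -
  have "{1..} \<noteq> ({} :: nat set)" by auto
  moreover have "beta_coef \<mu> m - e < beta_coef \<mu> m" using assms by simp
  ultimately show ?thesis
    unfolding beta_coef_def using less_cSUP_iff[OF _ bdd_above_beta_sa_blocks] by blast
qed

end

section \<open>Block frequencies\<close>

lemma sum_comp_inj_le_suminf: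
  fixes f :: "nat \<Rightarrow> real"
  assumes "summable f" "\<And>n. 0 \<le> f n" "finite K" "inj_on g K"
  shows "(\<Sum>k\<in>K. f (g k)) \<le> suminf f"
  using sum_le_suminf[of f "g ` K"] assms by (simp add: sum.reindex)

text \<open>Each lag \<open>k \<ge> 1\<close> occurs at most once on either side of the diagonal, so a row of the
  covariance array costs at most \<open>1 + 2 \<Sum> b\<close>.\<close>

lemma sum_lag_terms_le:
  fixes b c :: "nat \<Rightarrow> real"
  assumes b: "summable b" "\<And>m. 0 \<le> b m" and L: "L \<ge> 1"
    and c: "\<bar>c 0\<bar> \<le> 1" "\<And>k. k \<ge> 1 \<Longrightarrow> \<bar>c k\<bar> \<le> b ((k - 1) * L)"
    and i: "i < t"
  shows "(\<Sum>i'<t. \<bar>c (if i \<le> i' then i' - i else i - i')\<bar>) \<le> 1 + 2 * suminf b"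
proof -
  let ?a = "\<lambda>i'. \<bar>c (if i \<le> i' then i' - i else i - i')\<bar>"
  have split: "{..<t} = {..<i} \<union> {i} \<union> {i<..<t}" using i by auto
  have "(\<Sum>i'<t. ?a i') = (\<Sum>i'<i. ?a i') + ?a i + (\<Sum>i'\<in>{i<..<t}. ?a i')"
    unfolding split by (subst sum.union_disjoint, auto)+
  moreover have "(\<Sum>i'<i. ?a i') \<le> (\<Sum>i'<i. b ((i - i' - 1) * L))"
  proof (intro sum_mono)
    fix i' assume "i' \<in> {..<i}"
    then show "?a i' \<le> b ((i - i' - 1) * L)" using c(2)[of "i - i'"] by simp
  qed
  moreover have "(\<Sum>i'\<in>{i<..<t}. ?a i') \<le> (\<Sum>i'\<in>{i<..<t}. b ((i' - i - 1) * L))"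
  proof (intro sum_mono)
    fix i' assume "i' \<in> {i<..<t}"
    then show "?a i' \<le> b ((i' - i - 1) * L)" using c(2)[of "i' - i"] by auto
  qed
  moreover have "(\<Sum>i'<i. b ((i - i' - 1) * L)) \<le> suminf b"
    using L by (intro sum_comp_inj_le_suminf[OF b]) (auto simp: inj_on_def)
  moreover have "(\<Sum>i'\<in>{i<..<t}. b ((i' - i - 1) * L)) \<le> suminf b"
    using L by (intro sum_comp_inj_le_suminf[OF b]) (auto simp: inj_on_def)
  moreover have "?a i \<le> 1" using c(1) by simp
  ultimately show ?thesis by linarith
qed

context stationary_process
begin

definition block_event :: "nat \<Rightarrow> (nat \<Rightarrow> real) set \<Rightarrow> nat \<Rightarrow> (nat \<Rightarrow> real) set" where
  "block_event L E i = shift (i * L) -` E \<inter> space \<mu>"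

definition block_freq :: "nat \<Rightarrow> (nat \<Rightarrow> real) set \<Rightarrow> nat \<Rightarrow> (nat \<Rightarrow> real) \<Rightarrow> real" where
  "block_freq L E t \<omega> = (\<Sum>i<t. indicator (block_event L E i) \<omega>) / real t"

lemma block_event_sets[measurable]: "E \<in> sets \<mu> \<Longrightarrow> block_event L E i \<in> sets \<mu>"
  unfolding block_event_def by simp

lemma block_freq_measurable[measurable]: "E \<in> sets \<mu> \<Longrightarrow> block_freq L E t \<in> borel_measurable \<mu>"
  unfolding block_freq_def by simp

lemma mem_block_event: "\<omega> \<in> space \<mu> \<Longrightarrow> \<omega> \<in> block_event L E i \<longleftrightarrow> shift (i * L) \<omega> \<in> E"
  unfolding block_event_def by auto

lemma block_freq_bounds: "0 \<le> block_freq L E t \<omega>" "block_freq L E t \<omega> \<le> 1"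
proof -
  have "(\<Sum>i<t. indicator (block_event L E i) \<omega> :: real) \<le> (\<Sum>i<t. 1)"
    by (intro sum_mono) (simp add: indicator_def)
  then show "0 \<le> block_freq L E t \<omega>" "block_freq L E t \<omega> \<le> 1"
    unfolding block_freq_def by (auto intro!: sum_nonneg divide_nonneg_nonneg simp: divide_le_eq)
qed

lemma prob_block_event: "E \<in> sets \<mu> \<Longrightarrow> prob (block_event L E i) = prob E"
  unfolding block_event_def by (rule prob_shift_vimage)

lemma prob_block_event_Int:
  assumes "E \<in> sets \<mu>"
  shows "prob (block_event L E i \<inter> block_event L E i') = prob (E \<inter> block_event L E (if i \<le> i' then i' - i else i - i'))"
proof -
  have *: "prob (block_event L E i \<inter> block_event L E (i + k)) = prob (E \<inter> block_event L E k)" for i k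
  proof -
    have "block_event L E i \<inter> block_event L E (i + k) = shift (i * L) -` (E \<inter> block_event L E k) \<inter> space \<mu>"
      unfolding block_event_def using shift_in_space by (auto simp: shift_shift algebra_simps)
    moreover have "E \<inter> block_event L E k \<in> sets \<mu>" using assms by simp
    ultimately show ?thesis by (simp only: prob_shift_vimage)
  qed
  show ?thesis
    using *[of i "i' - i"] *[of i' "i - i'"] by (cases "i \<le> i'") (simp_all add: Int_commute)
qed

lemma abs_prob_block_event_Int_minus_le_beta_coef:
  assumes E: "E \<in> gen_sa \<mu> {0..<L}" and L: "L \<ge> 1" and k: "k \<ge> 1"
  shows "\<bar>prob (E \<inter> block_event L E k) - (prob E)\<^sup>2\<bar> \<le> beta_coef \<mu> (Suc ((k - 1) * L))"
proof -
  have "block_event L E k \<in> gen_sa \<mu> ((\<lambda>t. t + k * L) ` {0..<L})"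
    unfolding block_event_def by (rule shift_vimage_in_gen_sa[OF E])
  moreover have "(\<lambda>t. t + k * L) ` {0..<L} \<subseteq> {L + Suc ((k - 1) * L) - 1..}"
    using k by (auto simp: algebra_simps)
  ultimately have "block_event L E k \<in> gen_sa \<mu> {L + Suc ((k - 1) * L) - 1..}"
    using gen_sa_mono by blast
  then have "\<bar>prob (E \<inter> block_event L E k) - prob E * prob (block_event L E k)\<bar>
      \<le> beta_sa \<mu> (gen_sa \<mu> {0..<L}) (gen_sa \<mu> {L + Suc ((k - 1) * L) - 1..})"
    by (rule abs_prob_Int_minus_mult_le_beta_sa[OF E])
  also have "\<dots> \<le> beta_coef \<mu> (Suc ((k - 1) * L))" using L by (rule beta_sa_le_beta_coef)
  moreover have "prob (block_event L E k) = prob E"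
    using E gen_sa_subset_sets by (auto intro: prob_block_event)
  ultimately show ?thesis by (simp add: power2_eq_square)
qed

lemma integral_centered_block_indicators:
  assumes "E \<in> sets \<mu>"
  shows "(\<integral>\<omega>. (indicator (block_event L E i) \<omega> - prob E) * (indicator (block_event L E i') \<omega> - prob E) \<partial>\<mu>)
           = prob (block_event L E i \<inter> block_event L E i') - (prob E)\<^sup>2"
proof -
  have "(indicator (block_event L E i) \<omega> - prob E) * (indicator (block_event L E i') \<omega> - prob E)
      = indicator (block_event L E i \<inter> block_event L E i') \<omega> - prob E * indicator (block_event L E i) \<omega>
          - prob E * indicator (block_event L E i') \<omega> + (prob E)\<^sup>2" for \<omega>
    by (auto simp: indicator_def power2_eq_square algebra_simps)
  moreover have "integrable \<mu> (indicator A :: _ \<Rightarrow> real)" if "A \<in> sets \<mu>" for A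
    using that by (intro integrable_real_indicator) (auto simp: emeasure_eq_measure)
  ultimately show ?thesis
    using assms by (simp add: prob_space prob_block_event power2_eq_square)
qed

lemma integral_sq_block_freq_deviation_eq:
  assumes E: "E \<in> sets \<mu>" and t: "t \<ge> 1"
  shows "(\<integral>\<omega>. (block_freq L E t \<omega> - prob E)\<^sup>2 \<partial>\<mu>)
    = (\<Sum>i<t. \<Sum>i'<t. prob (E \<inter> block_event L E (if i \<le> i' then i' - i else i - i')) - (prob E)\<^sup>2) / (real t)\<^sup>2"
proof -
  define a where "a i \<omega> = (indicator (block_event L E i) \<omega> - prob E :: real)" for i \<omega>
  have a_bound: "\<bar>a i \<omega>\<bar> \<le> 1" for i \<omega>
    unfolding a_def by (auto simp: indicator_def)
  have int_a: "integrable \<mu> (\<lambda>\<omega>. a i \<omega> * a i' \<omega>)" for i i'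
    using E a_bound unfolding a_def
    by (intro integrable_const_bound[where B=1]) (auto simp: abs_mult intro!: AE_I2 mult_le_one)
  have sq: "(block_freq L E t \<omega> - prob E)\<^sup>2 = (\<Sum>i<t. \<Sum>i'<t. a i \<omega> * a i' \<omega>) / (real t)\<^sup>2" for \<omega>
  proof -
    have "block_freq L E t \<omega> - prob E = (\<Sum>i<t. a i \<omega>) / real t"
      unfolding a_def block_freq_def using t by (simp add: sum_subtractf field_simps)
    then show ?thesis by (simp add: power_divide power2_eq_square sum_product)
  qed
  have "(\<integral>\<omega>. (block_freq L E t \<omega> - prob E)\<^sup>2 \<partial>\<mu>)
      = (\<integral>\<omega>. (\<Sum>i<t. \<Sum>i'<t. a i \<omega> * a i' \<omega>) \<partial>\<mu>) / (real t)\<^sup>2"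
    unfolding sq by (rule integral_divide_zero)
  also have "\<dots> = (\<Sum>i<t. \<Sum>i'<t. \<integral>\<omega>. a i \<omega> * a i' \<omega> \<partial>\<mu>) / (real t)\<^sup>2"
    using int_a by (simp add: integral_sum integrable_sum)
  finally show ?thesis
    unfolding a_def using E by (simp add: integral_centered_block_indicators prob_block_event_Int)
qed

lemma integral_sq_block_freq_deviation_le:
  assumes summ: "summable (\<lambda>m. beta_coef \<mu> (Suc m))"
    and E: "E \<in> gen_sa \<mu> {0..<L}" and L: "L \<ge> 1" and t: "t \<ge> 1"
  shows "(\<integral>\<omega>. (block_freq L E t \<omega> - prob E)\<^sup>2 \<partial>\<mu>) \<le> (1 + 2 * (\<Sum>m. beta_coef \<mu> (Suc m))) / real t"
proof -
  define c where "c k = prob (E \<inter> block_event L E k) - (prob E)\<^sup>2" for k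
  have c_bound: "\<bar>c k\<bar> \<le> 1" for k
    using measure_nonneg[of \<mu> E] prob_le_1[of E] measure_nonneg[of \<mu> "E \<inter> block_event L E k"]
      prob_le_1[of "E \<inter> block_event L E k"] power_le_one[of "prob E" 2] zero_le_power2[of "prob E"]
    unfolding c_def abs_le_iff by linarith
  have "(\<integral>\<omega>. (block_freq L E t \<omega> - prob E)\<^sup>2 \<partial>\<mu>)
      = (\<Sum>i<t. \<Sum>i'<t. c (if i \<le> i' then i' - i else i - i')) / (real t)\<^sup>2"
    unfolding c_def using E gen_sa_subset_sets t by (intro integral_sq_block_freq_deviation_eq) auto
  also have "\<dots> \<le> (\<Sum>i<t. 1 + 2 * (\<Sum>m. beta_coef \<mu> (Suc m))) / (real t)\<^sup>2"
  proof (intro divide_right_mono sum_mono)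
    fix i assume "i \<in> {..<t}"
    then have "(\<Sum>i'<t. \<bar>c (if i \<le> i' then i' - i else i - i')\<bar>) \<le> 1 + 2 * (\<Sum>m. beta_coef \<mu> (Suc m))"
      using c_bound abs_prob_block_event_Int_minus_le_beta_coef[OF E L] beta_coef_nonneg
      unfolding c_def by (intro sum_lag_terms_le[where b = "\<lambda>m. beta_coef \<mu> (Suc m)", OF summ _ L]) auto
    moreover have "(\<Sum>i'<t. c (if i \<le> i' then i' - i else i - i'))
        \<le> (\<Sum>i'<t. \<bar>c (if i \<le> i' then i' - i else i - i')\<bar>)"
      by (rule sum_mono) simp
    ultimately show "(\<Sum>i'<t. c (if i \<le> i' then i' - i else i - i')) \<le> 1 + 2 * (\<Sum>m. beta_coef \<mu> (Suc m))"
      by linarith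
  qed simp
  also have "\<dots> = (1 + 2 * (\<Sum>m. beta_coef \<mu> (Suc m))) / real t"
    using t by (simp add: power2_eq_square)
  finally show ?thesis .
qed

lemma prob_block_freq_deviation_le:
  assumes summ: "summable (\<lambda>m. beta_coef \<mu> (Suc m))"
    and E: "E \<in> gen_sa \<mu> {0..<L}" and L: "L \<ge> 1" and t: "t \<ge> 1" and \<eta>: "\<eta> > 0"
  shows "prob {\<omega>\<in>space \<mu>. \<eta> \<le> \<bar>block_freq L E t \<omega> - prob E\<bar>}
           \<le> (1 + 2 * (\<Sum>m. beta_coef \<mu> (Suc m))) / (real t * \<eta>\<^sup>2)"
proof -
  have Es: "E \<in> sets \<mu>" using E gen_sa_subset_sets by blast
  have "\<bar>block_freq L E t \<omega> - prob E\<bar> \<le> 1" for \<omega>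
    using block_freq_bounds[of L E t \<omega>] measure_nonneg[of \<mu> E] prob_le_1[of E]
    unfolding abs_le_iff by linarith
  then have "\<bar>(block_freq L E t \<omega> - prob E)\<^sup>2\<bar> \<le> 1" for \<omega>
    by (simp add: abs_square_le_1)
  then have "integrable \<mu> (\<lambda>\<omega>. (block_freq L E t \<omega> - prob E)\<^sup>2)"
    using Es by (intro integrable_const_bound[where B=1]) auto
  then have "prob {\<omega>\<in>space \<mu>. \<eta> \<le> \<bar>block_freq L E t \<omega> - prob E\<bar>}
      \<le> (\<integral>\<omega>. (block_freq L E t \<omega> - prob E)\<^sup>2 \<partial>\<mu>) / \<eta>\<^sup>2"
    using Es \<eta> by (intro second_moment_method) auto
  also have "\<dots> \<le> (1 + 2 * (\<Sum>m. beta_coef \<mu> (Suc m))) / real t / \<eta>\<^sup>2"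
    using integral_sq_block_freq_deviation_le[OF summ E L t] by (intro divide_right_mono) auto
  finally show ?thesis by simp
qed

end

section \<open>The estimator and its population counterpart\<close>

lemma abs_Max_image_diff_le:
  fixes f g :: "'a \<Rightarrow> real"
  assumes "finite S" "S \<noteq> {}" "\<And>x. x \<in> S \<Longrightarrow> \<bar>f x - g x\<bar> \<le> c"
  shows "\<bar>Max (f ` S) - Max (g ` S)\<bar> \<le> c"
proof -
  have "Max (f ` S) \<le> Max (g ` S) + c" if "\<And>x. x \<in> S \<Longrightarrow> f x - g x \<le> c" for f g :: "'a \<Rightarrow> real"
  proof (rule Max.boundedI)
    fix y assume "y \<in> f ` S"
    then obtain x where "x \<in> S" "y = f x" by auto
    moreover have "g x \<le> Max (g ` S)" using \<open>x \<in> S\<close> assms(1) by auto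
    ultimately show "y \<le> Max (g ` S) + c" using that[of x] by linarith
  qed (use assms in auto)
  from this[of f g] this[of g f] show ?thesis using assms(3) by (auto simp: abs_le_iff)
qed

lemma abs_mult_diff_le:
  fixes a b c d :: real
  assumes "\<bar>a\<bar> \<le> 1" "\<bar>d\<bar> \<le> 1"
  shows "\<bar>a * b - c * d\<bar> \<le> \<bar>a - c\<bar> + \<bar>b - d\<bar>"
proof -
  have "\<bar>a * b - c * d\<bar> = \<bar>a * (b - d) + d * (a - c)\<bar>" by (simp add: algebra_simps)
  also have "\<dots> \<le> \<bar>a\<bar> * \<bar>b - d\<bar> + \<bar>d\<bar> * \<bar>a - c\<bar>" by (simp add: abs_mult[symmetric] abs_triangle_ineq)
  also have "\<dots> \<le> \<bar>b - d\<bar> + \<bar>a - c\<bar>" using assms by (intro add_mono mult_left_le_one_le) auto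
  finally show ?thesis by simp
qed

context stationary_process
begin

definition dyadic_code :: "nat \<Rightarrow> nat \<Rightarrow> nat \<Rightarrow> (nat \<Rightarrow> real) \<Rightarrow> nat list" where
  "dyadic_code l a k \<omega> = map (dyadic_index l) (map \<omega> [a..<a + k])"

definition cylinder :: "nat \<Rightarrow> nat \<Rightarrow> nat list \<Rightarrow> (nat \<Rightarrow> real) set" where
  "cylinder l a is = {\<omega>\<in>space \<mu>. dyadic_code l a (length is) \<omega> = is}"

lemma dyadic_code_in_words: "dyadic_code l a k \<omega> \<in> dyadic_words k l"
  unfolding dyadic_code_def dyadic_words_def using dyadic_index_less by auto

lemma length_dyadic_code[simp]: "length (dyadic_code l a k \<omega>) = k"
  unfolding dyadic_code_def by simp

lemma dyadic_code_coarsen: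
  assumes "l0 \<le> l" "k0 \<le> k"
  shows "dyadic_code l0 a k0 \<omega> = map (\<lambda>x. x div 2 ^ (l - l0)) (take k0 (dyadic_code l a k \<omega>))"
proof -
  have "take k0 [a..<a + k] = [a..<a + k0]" using assms(2) by (simp add: take_upt min_def)
  then show ?thesis unfolding dyadic_code_def using dyadic_index_coarsen[OF assms(1)] by (simp add: take_map)
qed

lemma cylinder_eq: "is \<in> dyadic_words k l \<Longrightarrow> cylinder l a is = {\<omega>\<in>space \<mu>. dyadic_code l a k \<omega> = is}"
  unfolding cylinder_def dyadic_words_def by auto

lemma cylinder_eq_INT_dyad:
  assumes "is \<in> dyadic_words k l"
  shows "cylinder l a is = space \<mu> \<inter> (\<Inter>r<k. (\<lambda>\<omega>. \<omega> (a + r)) -` dyad l (is ! r))"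
proof -
  have len: "length is = k" and lt: "\<And>r. r < k \<Longrightarrow> is ! r < 2 ^ l"
    using assms unfolding dyadic_words_def by (auto simp: subset_iff)
  have "dyadic_code l a k \<omega> = is \<longleftrightarrow> (\<forall>r<k. dyadic_index l (\<omega> (a + r)) = is ! r)" for \<omega>
    unfolding dyadic_code_def by (auto simp: list_eq_iff_nth_eq len)
  then show ?thesis
    unfolding cylinder_eq[OF assms] using mem_dyad_iff lt space_\<mu> by auto
qed

lemma cylinder_in_gen_sa: "is \<in> dyadic_words k l \<Longrightarrow> cylinder l a is \<in> gen_sa \<mu> {a..<a + k}"
proof -
  interpret G: sigma_algebra "space \<mu>" "gen_sa \<mu> {a..<a + k}" by (rule sigma_algebra_gen_sa)
  assume w: "is \<in> dyadic_words k l"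
  show ?thesis
  proof (cases "k = 0")
    case False
    then have "space \<mu> \<inter> (\<Inter>r<k. (\<lambda>\<omega>. \<omega> (a + r)) -` dyad l (is ! r))
        = (\<Inter>r<k. (\<lambda>\<omega>. \<omega> (a + r)) -` dyad l (is ! r) \<inter> space \<mu>)" by auto
    moreover have "(\<Inter>r<k. (\<lambda>\<omega>. \<omega> (a + r)) -` dyad l (is ! r) \<inter> space \<mu>) \<in> gen_sa \<mu> {a..<a + k}"
      using False by (intro G.finite_INT coordinate_vimage_in_gen_sa dyad_borel) auto
    ultimately show ?thesis using cylinder_eq_INT_dyad[OF w] by simp
  qed (simp add: cylinder_eq_INT_dyad[OF w] space_in_gen_sa)
qed

lemma cylinder_sets[measurable]: "is \<in> dyadic_words k l \<Longrightarrow> cylinder l a is \<in> sets \<mu>"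
  using cylinder_in_gen_sa gen_sa_subset_sets by blast

lemma shift_mem_cylinder:
  "\<omega> \<in> space \<mu> \<Longrightarrow> shift s \<omega> \<in> cylinder l a is \<longleftrightarrow> dyadic_code l (s + a) (length is) \<omega> = is"
proof -
  have "map (shift s \<omega>) [a..<a + k] = map \<omega> [s + a..<s + a + k]" for k
    by (simp add: list_eq_iff_nth_eq shift_def algebra_simps)
  then show "\<omega> \<in> space \<mu> \<Longrightarrow> ?thesis"
    unfolding cylinder_def dyadic_code_def using shift_in_space by (simp del: map_map)
qed

lemma cylinder_shift: "cylinder l a is = shift a -` cylinder l 0 is \<inter> space \<mu>"
  using shift_mem_cylinder[of _ a l 0 "is"] unfolding cylinder_def by auto

lemma prob_cylinder: "is \<in> dyadic_words k l \<Longrightarrow> prob (cylinder l a is) = prob (cylinder l 0 is)"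
  unfolding cylinder_shift[of l a "is"] by (rule prob_shift_vimage) (rule cylinder_sets)

lemma mem_cube_iff_dyadic_code:
  assumes "\<omega> \<in> space \<mu>" "is \<in> dyadic_words k l"
  shows "map \<omega> [a..<a + k] \<in> cube l is \<longleftrightarrow> dyadic_code l a k \<omega> = is"
  unfolding dyadic_code_def using assms space_\<mu> by (intro mem_cube_iff) auto

lemma emp_mu_cube:
  assumes "\<omega> \<in> space \<mu>" "is \<in> dyadic_words k l"
  shows "emp_mu t k \<omega> (cube l is) = block_freq k (cylinder l 0 is) t \<omega>"
proof -
  have "length is = k" using assms(2) unfolding dyadic_words_def by auto
  then have "map \<omega> [i * k..<(i + 1) * k] \<in> cube l is \<longleftrightarrow> \<omega> \<in> block_event k (cylinder l 0 is) i" for i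
    using mem_cube_iff_dyadic_code[OF assms, of "i * k"] mem_block_event[OF assms(1)] shift_mem_cylinder[OF assms(1)]
    by (simp add: algebra_simps)
  then show ?thesis unfolding emp_mu_def block_freq_def by (simp add: indicator_def)
qed

lemma emp_gamma_cube:
  assumes "\<omega> \<in> space \<mu>" "is1 \<in> dyadic_words j l" "is2 \<in> dyadic_words j' l"
    and "j + m - 1 + j' = n" "m \<ge> 1"
  shows "emp_gamma t n m j \<omega> (cube l is1) (cube l is2)
           = block_freq n (cylinder l 0 is1 \<inter> cylinder l (j + m - 1) is2) t \<omega>"
proof -
  have len: "length is1 = j" "length is2 = j'" using assms(2,3) unfolding dyadic_words_def by auto
  have "map \<omega> [i * n..<i * n + j] \<in> cube l is1 \<longleftrightarrow> shift (i * n) \<omega> \<in> cylinder l 0 is1" for i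
    using mem_cube_iff_dyadic_code[OF assms(1,2), of "i * n"] shift_mem_cylinder[OF assms(1), of "i * n" l 0 is1] len
    by simp
  moreover have "map \<omega> [i * n + j + m - 1..<(i + 1) * n] \<in> cube l is2
      \<longleftrightarrow> shift (i * n) \<omega> \<in> cylinder l (j + m - 1) is2" for i
  proof -
    have "(i + 1) * n = (i * n + j + m - 1) + j'" using assms(4,5) by (simp add: algebra_simps)
    then show ?thesis
      using mem_cube_iff_dyadic_code[OF assms(1,3), of "i * n + j + m - 1"]
        shift_mem_cylinder[OF assms(1), of "i * n" l "j + m - 1" is2] len assms(5)
      by (simp add: algebra_simps)
  qed
  ultimately have "(indicator (cube l is1) (map \<omega> [i * n..<i * n + j]) :: real)
        * indicator (cube l is2) (map \<omega> [i * n + j + m - 1..<(i + 1) * n])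
      = indicator (block_event n (cylinder l 0 is1 \<inter> cylinder l (j + m - 1) is2) i) \<omega>" for i
    using mem_block_event[OF assms(1)] by (simp add: indicator_def)
  then show ?thesis unfolding emp_gamma_def block_freq_def by simp
qed

text \<open>The population counterpart of \<open>beta_hat\<close>: empirical frequencies of cubes are replaced
  by the probabilities of the corresponding cylinders.\<close>

definition cell_discrepancy :: "nat \<Rightarrow> nat \<Rightarrow> nat \<Rightarrow> nat \<Rightarrow> real" where
  "cell_discrepancy l n m j = (1 / 2) * (\<Sum>is1\<in>dyadic_words j l. \<Sum>is2\<in>dyadic_words (n - m - j + 1) l.
      \<bar>prob (cylinder l 0 is1 \<inter> cylinder l (j + m - 1) is2) - prob (cylinder l 0 is1) * prob (cylinder l 0 is2)\<bar>)"

definition dyadic_beta :: "nat \<Rightarrow> nat \<Rightarrow> nat \<Rightarrow> real" where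
  "dyadic_beta l n m = Max (cell_discrepancy l n m ` {1..n - m})"

lemma cell_discrepancy_le_dyadic_beta: "j \<in> {1..n - m} \<Longrightarrow> cell_discrepancy l n m j \<le> dyadic_beta l n m"
  unfolding dyadic_beta_def by (intro Max_ge) auto

lemma dyadic_beta_nonneg: "m < n \<Longrightarrow> 0 \<le> dyadic_beta l n m"
proof -
  assume "m < n"
  then have "cell_discrepancy l n m 1 \<le> dyadic_beta l n m"
    by (intro cell_discrepancy_le_dyadic_beta) auto
  moreover have "0 \<le> cell_discrepancy l n m 1"
    unfolding cell_discrepancy_def by (intro mult_nonneg_nonneg sum_nonneg) auto
  ultimately show ?thesis by linarith
qed

lemma beta_hat_eq_block_freq:
  assumes "\<omega> \<in> space \<mu>" "m \<ge> 1"
  shows "beta_hat l t n \<omega> m = Max ((\<lambda>j. (1 / 2) * (\<Sum>is1\<in>dyadic_words j l. \<Sum>is2\<in>dyadic_words (n - m - j + 1) l.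
      \<bar>block_freq n (cylinder l 0 is1 \<inter> cylinder l (j + m - 1) is2) t \<omega>
        - block_freq j (cylinder l 0 is1) t \<omega> * block_freq (n - m - j + 1) (cylinder l 0 is2) t \<omega>\<bar>)) ` {1..n - m})"
  unfolding beta_hat_def Let_def sum_dcubes
proof (intro arg_cong[where f = Max] image_cong refl arg_cong[where f = "\<lambda>x. 1 / 2 * x"] sum.cong)
  fix j is1 is2
  assume "j \<in> {1..n - m}" "is1 \<in> dyadic_words j l" "is2 \<in> dyadic_words (n - m - j + 1) l"
  moreover have "j + m - 1 + (n - m - j + 1) = n" using \<open>j \<in> {1..n - m}\<close> assms(2) by auto
  ultimately show "\<bar>emp_gamma t n m j \<omega> (cube l is1) (cube l is2)
        - emp_mu t j \<omega> (cube l is1) * emp_mu t (n - m - j + 1) \<omega> (cube l is2)\<bar>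
      = \<bar>block_freq n (cylinder l 0 is1 \<inter> cylinder l (j + m - 1) is2) t \<omega>
        - block_freq j (cylinder l 0 is1) t \<omega> * block_freq (n - m - j + 1) (cylinder l 0 is2) t \<omega>\<bar>"
    using assms by (simp add: emp_gamma_cube emp_mu_cube)
qed

end

section \<open>Deviation of the estimator\<close>

lemma abs_double_sum_diff_le:
  fixes f g :: "'a \<Rightarrow> 'b \<Rightarrow> real"
  assumes "\<And>x y. x \<in> A \<Longrightarrow> y \<in> B \<Longrightarrow> \<bar>f x y - g x y\<bar> \<le> c"
  shows "\<bar>(\<Sum>x\<in>A. \<Sum>y\<in>B. f x y) - (\<Sum>x\<in>A. \<Sum>y\<in>B. g x y)\<bar> \<le> real (card A) * real (card B) * c"
proof -
  have "\<bar>(\<Sum>x\<in>A. \<Sum>y\<in>B. f x y) - (\<Sum>x\<in>A. \<Sum>y\<in>B. g x y)\<bar> = \<bar>\<Sum>x\<in>A. \<Sum>y\<in>B. f x y - g x y\<bar>"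
    by (simp add: sum_subtractf)
  also have "\<dots> \<le> (\<Sum>x\<in>A. \<Sum>y\<in>B. \<bar>f x y - g x y\<bar>)"
    by (rule order.trans[OF sum_abs sum_mono[OF sum_abs]])
  also have "\<dots> \<le> (\<Sum>x\<in>A. \<Sum>y\<in>B. c)"
    using assms by (intro sum_mono) auto
  finally show ?thesis by simp
qed

lemma (in prob_space) measure_UN_le_card_mult:
  assumes "finite I" "\<And>i. i \<in> I \<Longrightarrow> A i \<in> events" "\<And>i. i \<in> I \<Longrightarrow> prob (A i) \<le> q"
  shows "prob (\<Union>i\<in>I. A i) \<le> real (card I) * q"
proof -
  have "prob (\<Union>i\<in>I. A i) \<le> (\<Sum>i\<in>I. prob (A i))" using assms by (intro measure_UNION_le) auto
  also have "\<dots> \<le> (\<Sum>i\<in>I. q)" using assms by (intro sum_mono) auto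
  finally show ?thesis by simp
qed

context stationary_process
begin

definition freq_deviation_event :: "nat \<Rightarrow> (nat \<Rightarrow> real) set \<Rightarrow> nat \<Rightarrow> real \<Rightarrow> (nat \<Rightarrow> real) set" where
  "freq_deviation_event L E t \<eta> = {\<omega>\<in>space \<mu>. \<eta> \<le> \<bar>block_freq L E t \<omega> - prob E\<bar>}"

text \<open>Outside this event every block frequency entering the \<open>j\<close>-th term of the maximum defining
  \<open>beta_hat l t n \<omega> m\<close> is \<open>\<eta>\<close>-close to its probability.\<close>

definition split_inaccuracy_event :: "nat \<Rightarrow> nat \<Rightarrow> nat \<Rightarrow> nat \<Rightarrow> real \<Rightarrow> nat \<Rightarrow> (nat \<Rightarrow> real) set" where
  "split_inaccuracy_event l n m t \<eta> j =
      (\<Union>p\<in>dyadic_words j l \<times> dyadic_words (n - m - j + 1) l.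
         freq_deviation_event n (cylinder l 0 (fst p) \<inter> cylinder l (j + m - 1) (snd p)) t \<eta>)
    \<union> (\<Union>w\<in>dyadic_words j l. freq_deviation_event j (cylinder l 0 w) t \<eta>)
    \<union> (\<Union>w\<in>dyadic_words (n - m - j + 1) l. freq_deviation_event (n - m - j + 1) (cylinder l 0 w) t \<eta>)"

definition inaccuracy_event :: "nat \<Rightarrow> nat \<Rightarrow> nat \<Rightarrow> nat \<Rightarrow> real \<Rightarrow> (nat \<Rightarrow> real) set" where
  "inaccuracy_event l n m t \<eta> = (\<Union>j\<in>{1..n - m}. split_inaccuracy_event l n m t \<eta> j)"

lemma freq_deviation_event_sets[measurable]: "E \<in> sets \<mu> \<Longrightarrow> freq_deviation_event L E t \<eta> \<in> sets \<mu>"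
  unfolding freq_deviation_event_def by measurable

lemma split_inaccuracy_event_sets[measurable]: "split_inaccuracy_event l n m t \<eta> j \<in> sets \<mu>"
  unfolding split_inaccuracy_event_def using finite_dyadic_words
  by (intro sets.finite_UN sets.Un) (auto intro: freq_deviation_event_sets)

lemma inaccuracy_event_sets[measurable]: "inaccuracy_event l n m t \<eta> \<in> sets \<mu>"
  unfolding inaccuracy_event_def by (intro sets.finite_UN) auto

lemma prob_freq_deviation_event_le:
  assumes "summable (\<lambda>m. beta_coef \<mu> (Suc m))"
    and "E \<in> gen_sa \<mu> {0..<L}" "L \<ge> 1" "t \<ge> 1" "\<eta> > 0"
  shows "prob (freq_deviation_event L E t \<eta>) \<le> (1 + 2 * (\<Sum>m. beta_coef \<mu> (Suc m))) / (real t * \<eta>\<^sup>2)"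
  unfolding freq_deviation_event_def using prob_block_freq_deviation_le[OF assms] .

lemma real_card_dyadic_words_le: "k \<le> n \<Longrightarrow> real (card (dyadic_words k l)) \<le> 2 ^ (l * n)"
  unfolding card_dyadic_words by (simp add: power_increasing)

lemma
  assumes "j \<in> {1..n - m}" "m \<ge> 1"
  shows gap_block_end: "j + m - 1 + (n - m - j + 1) = n"
    and real_card_dyadic_word_pairs_le:
      "real (card (dyadic_words j l \<times> dyadic_words (n - m - j + 1) l)) \<le> 2 ^ (l * n)"
proof -
  show n: "j + m - 1 + (n - m - j + 1) = n" using assms by auto
  have "(2::real) ^ (l * j) * 2 ^ (l * (n - m - j + 1)) = 2 ^ (l * (j + (n - m - j + 1)))"
    by (simp add: power_add distrib_left)
  also have "\<dots> \<le> 2 ^ (l * n)"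
    using n assms by (intro power_increasing mult_le_mono2) auto
  finally show "real (card (dyadic_words j l \<times> dyadic_words (n - m - j + 1) l)) \<le> 2 ^ (l * n)"
    by (simp add: card_cartesian_product card_dyadic_words)
qed

lemma prob_UN_freq_deviation_event_le:
  assumes summ: "summable (\<lambda>m. beta_coef \<mu> (Suc m))"
    and W: "finite W" "\<And>w. w \<in> W \<Longrightarrow> C w \<in> gen_sa \<mu> {0..<L}" and "L \<ge> 1" "t \<ge> 1" "\<eta> > 0"
  shows "prob (\<Union>w\<in>W. freq_deviation_event L (C w) t \<eta>)
           \<le> real (card W) * ((1 + 2 * (\<Sum>m. beta_coef \<mu> (Suc m))) / (real t * \<eta>\<^sup>2))"
  using assms gen_sa_subset_sets
  by (intro measure_UN_le_card_mult prob_freq_deviation_event_le freq_deviation_event_sets) blast+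

lemma prob_split_inaccuracy_event_le:
  assumes summ: "summable (\<lambda>m. beta_coef \<mu> (Suc m))"
    and j: "j \<in> {1..n - m}" and m: "m \<ge> 1" and t: "t \<ge> 1" and \<eta>: "\<eta> > 0"
  shows "prob (split_inaccuracy_event l n m t \<eta> j)
           \<le> 3 * 2 ^ (l * n) * ((1 + 2 * (\<Sum>m. beta_coef \<mu> (Suc m))) / (real t * \<eta>\<^sup>2))"
proof -
  define q where "q = (1 + 2 * (\<Sum>m. beta_coef \<mu> (Suc m))) / (real t * \<eta>\<^sup>2)"
  define k where "k = n - m - j + 1"
  define U1 where "U1 = (\<Union>p\<in>dyadic_words j l \<times> dyadic_words k l.
    freq_deviation_event n (cylinder l 0 (fst p) \<inter> cylinder l (j + m - 1) (snd p)) t \<eta>)"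
  define U2 where "U2 = (\<Union>w\<in>dyadic_words j l. freq_deviation_event j (cylinder l 0 w) t \<eta>)"
  define U3 where "U3 = (\<Union>w\<in>dyadic_words k l. freq_deviation_event k (cylinder l 0 w) t \<eta>)"
  have "0 \<le> (\<Sum>m. beta_coef \<mu> (Suc m))" by (rule suminf_nonneg[OF summ beta_coef_nonneg])
  then have q: "q \<ge> 0" unfolding q_def using t \<eta> by (auto intro!: divide_nonneg_pos)
  have jk: "j \<le> n" "k \<le> n" "j \<ge> 1" "k \<ge> 1" "j + m - 1 + k = n"
    using gap_block_end[OF j m] j m unfolding k_def by auto
  interpret G: sigma_algebra "space \<mu>" "gen_sa \<mu> {0..<n}" by (rule sigma_algebra_gen_sa)
  have "cylinder l 0 (fst p) \<inter> cylinder l (j + m - 1) (snd p) \<in> gen_sa \<mu> {0..<n}"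
    if "p \<in> dyadic_words j l \<times> dyadic_words k l" for p
    using that jk cylinder_in_gen_sa[of "fst p" j l 0] cylinder_in_gen_sa[of "snd p" k l "j + m - 1"]
      gen_sa_mono[of "{0..<j}" "{0..<n}"] gen_sa_mono[of "{j + m - 1..<j + m - 1 + k}" "{0..<n}"]
    by (intro G.Int) auto
  then have U1: "prob U1 \<le> real (card (dyadic_words j l \<times> dyadic_words k l)) * q"
    unfolding U1_def q_def using jk finite_dyadic_words
    by (intro prob_UN_freq_deviation_event_le[OF summ _ _ _ t \<eta>]) auto
  have U2: "prob U2 \<le> real (card (dyadic_words j l)) * q"
    unfolding U2_def q_def using jk cylinder_in_gen_sa[where a = 0]
    by (intro prob_UN_freq_deviation_event_le[OF summ _ _ _ t \<eta>]) (auto simp: finite_dyadic_words)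
  have U3: "prob U3 \<le> real (card (dyadic_words k l)) * q"
    unfolding U3_def q_def using jk cylinder_in_gen_sa[where a = 0]
    by (intro prob_UN_freq_deviation_event_le[OF summ _ _ _ t \<eta>]) (auto simp: finite_dyadic_words)
  have "U1 \<in> sets \<mu>" "U2 \<in> sets \<mu>" "U3 \<in> sets \<mu>"
    unfolding U1_def U2_def U3_def using finite_dyadic_words
    by (auto intro!: sets.finite_UN freq_deviation_event_sets sets.Int cylinder_sets)
  then have "prob (U1 \<union> U2 \<union> U3) \<le> prob U1 + prob U2 + prob U3"
    using measure_Un_le[of U1 \<mu> U2] measure_Un_le[of "U1 \<union> U2" \<mu> U3] by auto
  also have "\<dots> \<le> 2 ^ (l * n) * q + 2 ^ (l * n) * q + 2 ^ (l * n) * q"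
    using U1 U2 U3 real_card_dyadic_word_pairs_le[OF j m, of l]
      real_card_dyadic_words_le[OF jk(1), of l] real_card_dyadic_words_le[OF jk(2), of l] q
    unfolding k_def by (smt (verit, best) mult_right_mono)
  finally have "prob (U1 \<union> U2 \<union> U3) \<le> 3 * 2 ^ (l * n) * q" by linarith
  then show ?thesis unfolding split_inaccuracy_event_def U1_def U2_def U3_def k_def q_def .
qed

lemma prob_inaccuracy_event_le:
  assumes summ: "summable (\<lambda>m. beta_coef \<mu> (Suc m))"
    and m: "m \<ge> 1" "m < n" and t: "t \<ge> 1" and \<eta>: "\<eta> > 0"
  shows "prob (inaccuracy_event l n m t \<eta>)
           \<le> 3 * real n * 2 ^ (l * n) * ((1 + 2 * (\<Sum>m. beta_coef \<mu> (Suc m))) / (real t * \<eta>\<^sup>2))"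
proof -
  define q where "q = (1 + 2 * (\<Sum>m. beta_coef \<mu> (Suc m))) / (real t * \<eta>\<^sup>2)"
  have "0 \<le> (\<Sum>m. beta_coef \<mu> (Suc m))" by (rule suminf_nonneg[OF summ beta_coef_nonneg])
  then have q: "q \<ge> 0" unfolding q_def using t \<eta> by (auto intro!: divide_nonneg_pos)
  have "prob (inaccuracy_event l n m t \<eta>) \<le> real (card {1..n - m}) * (3 * 2 ^ (l * n) * q)"
    unfolding inaccuracy_event_def q_def
    using prob_split_inaccuracy_event_le[OF summ _ m(1) t \<eta>] by (intro measure_UN_le_card_mult) auto
  also have "\<dots> \<le> real n * (3 * 2 ^ (l * n) * q)" using q by (intro mult_right_mono) auto
  finally show ?thesis unfolding q_def[symmetric] by (simp add: mult_ac)
qed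

lemma abs_cell_term_diff_le:
  assumes \<omega>: "\<omega> \<in> space \<mu> - split_inaccuracy_event l n m t \<eta> j"
    and w: "is1 \<in> dyadic_words j l" "is2 \<in> dyadic_words (n - m - j + 1) l"
  shows "\<bar>\<bar>block_freq n (cylinder l 0 is1 \<inter> cylinder l (j + m - 1) is2) t \<omega>
            - block_freq j (cylinder l 0 is1) t \<omega> * block_freq (n - m - j + 1) (cylinder l 0 is2) t \<omega>\<bar>
          - \<bar>prob (cylinder l 0 is1 \<inter> cylinder l (j + m - 1) is2)
            - prob (cylinder l 0 is1) * prob (cylinder l 0 is2)\<bar>\<bar> \<le> 3 * \<eta>"
proof -
  let ?k = "n - m - j + 1"
  have close: "\<bar>block_freq L E t \<omega> - prob E\<bar> < \<eta>" if "\<omega> \<notin> freq_deviation_event L E t \<eta>" for L E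
    using that \<omega> unfolding freq_deviation_event_def by auto
  have "\<omega> \<notin> freq_deviation_event n (cylinder l 0 is1 \<inter> cylinder l (j + m - 1) is2) t \<eta>"
    "\<omega> \<notin> freq_deviation_event j (cylinder l 0 is1) t \<eta>" "\<omega> \<notin> freq_deviation_event ?k (cylinder l 0 is2) t \<eta>"
    using \<omega> w unfolding split_inaccuracy_event_def by auto
  moreover have "\<bar>block_freq j (cylinder l 0 is1) t \<omega> * block_freq ?k (cylinder l 0 is2) t \<omega>
      - prob (cylinder l 0 is1) * prob (cylinder l 0 is2)\<bar>
    \<le> \<bar>block_freq j (cylinder l 0 is1) t \<omega> - prob (cylinder l 0 is1)\<bar>
      + \<bar>block_freq ?k (cylinder l 0 is2) t \<omega> - prob (cylinder l 0 is2)\<bar>"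
    using block_freq_bounds[of j "cylinder l 0 is1" t \<omega>] measure_nonneg[of \<mu> "cylinder l 0 is2"]
      prob_le_1[of "cylinder l 0 is2"]
    by (intro abs_mult_diff_le) auto
  ultimately show ?thesis using close by (smt (verit, best))
qed

lemma abs_beta_hat_minus_dyadic_beta_le:
  assumes \<omega>: "\<omega> \<in> space \<mu> - inaccuracy_event l n m t \<eta>" and m: "m \<ge> 1" "m < n" and \<eta>: "\<eta> > 0"
  shows "\<bar>beta_hat l t n \<omega> m - dyadic_beta l n m\<bar> \<le> 3 / 2 * \<eta> * 2 ^ (l * n)"
  unfolding beta_hat_eq_block_freq[OF DiffD1[OF \<omega>] m(1)] dyadic_beta_def
proof (intro abs_Max_image_diff_le)
  fix j assume j: "j \<in> {1..n - m}"
  then have "\<omega> \<in> space \<mu> - split_inaccuracy_event l n m t \<eta> j" using \<omega> unfolding inaccuracy_event_def by auto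
  then have "\<bar>(\<Sum>is1\<in>dyadic_words j l. \<Sum>is2\<in>dyadic_words (n - m - j + 1) l.
        \<bar>block_freq n (cylinder l 0 is1 \<inter> cylinder l (j + m - 1) is2) t \<omega>
          - block_freq j (cylinder l 0 is1) t \<omega> * block_freq (n - m - j + 1) (cylinder l 0 is2) t \<omega>\<bar>)
      - (\<Sum>is1\<in>dyadic_words j l. \<Sum>is2\<in>dyadic_words (n - m - j + 1) l.
        \<bar>prob (cylinder l 0 is1 \<inter> cylinder l (j + m - 1) is2) - prob (cylinder l 0 is1) * prob (cylinder l 0 is2)\<bar>)\<bar>
      \<le> real (card (dyadic_words j l)) * real (card (dyadic_words (n - m - j + 1) l)) * (3 * \<eta>)"
    by (intro abs_double_sum_diff_le abs_cell_term_diff_le)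
  also have "\<dots> \<le> 2 ^ (l * n) * (3 * \<eta>)"
    using real_card_dyadic_word_pairs_le[OF j m(1), of l] \<eta>
    unfolding card_cartesian_product by (intro mult_right_mono) auto
  finally have bound: "\<bar>(\<Sum>is1\<in>dyadic_words j l. \<Sum>is2\<in>dyadic_words (n - m - j + 1) l.
        \<bar>block_freq n (cylinder l 0 is1 \<inter> cylinder l (j + m - 1) is2) t \<omega>
          - block_freq j (cylinder l 0 is1) t \<omega> * block_freq (n - m - j + 1) (cylinder l 0 is2) t \<omega>\<bar>)
      - (\<Sum>is1\<in>dyadic_words j l. \<Sum>is2\<in>dyadic_words (n - m - j + 1) l.
        \<bar>prob (cylinder l 0 is1 \<inter> cylinder l (j + m - 1) is2) - prob (cylinder l 0 is1) * prob (cylinder l 0 is2)\<bar>)\<bar>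
      \<le> 2 ^ (l * n) * (3 * \<eta>)" .
  have "3 / 2 * \<eta> * 2 ^ (l * n) = 2 ^ (l * n) * (3 * \<eta>) / 2" by simp
  with bound show "\<bar>1 / 2 * (\<Sum>is1\<in>dyadic_words j l. \<Sum>is2\<in>dyadic_words (n - m - j + 1) l.
        \<bar>block_freq n (cylinder l 0 is1 \<inter> cylinder l (j + m - 1) is2) t \<omega>
          - block_freq j (cylinder l 0 is1) t \<omega> * block_freq (n - m - j + 1) (cylinder l 0 is2) t \<omega>\<bar>)
      - cell_discrepancy l n m j\<bar> \<le> 3 / 2 * \<eta> * 2 ^ (l * n)"
    unfolding cell_discrepancy_def abs_le_iff by linarith
qed (use m in auto)


section \<open>Convergence of the population discrepancy\<close>

definition cell :: "nat \<Rightarrow> nat \<Rightarrow> nat list \<times> nat list \<Rightarrow> ((nat \<Rightarrow> real) \<times> (nat \<Rightarrow> real)) set" where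
  "cell l a p = cylinder l 0 (fst p) \<times> cylinder l a (snd p)"

definition coded_rect :: "nat \<Rightarrow> nat \<Rightarrow> nat \<Rightarrow> nat \<Rightarrow> (nat list \<times> nat list) set \<Rightarrow> ((nat \<Rightarrow> real) \<times> (nat \<Rightarrow> real)) set" where
  "coded_rect j a l b S = {p \<in> space \<mu> \<times> space \<mu>. (dyadic_code l 0 j (fst p), dyadic_code l a b (snd p)) \<in> S}"

lemma coded_rect_eq_UN_cell:
  "coded_rect j a l b S = (\<Union>p\<in>(dyadic_words j l \<times> dyadic_words b l) \<inter> S. cell l a p)"
proof (intro equalityI subsetI)
  fix x assume "x \<in> coded_rect j a l b S"
  then show "x \<in> (\<Union>p\<in>(dyadic_words j l \<times> dyadic_words b l) \<inter> S. cell l a p)"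
    by (intro UN_I[of "(dyadic_code l 0 j (fst x), dyadic_code l a b (snd x))"])
      (auto simp: coded_rect_def cell_def cylinder_def dyadic_code_in_words mem_Times_iff)
qed (auto simp: coded_rect_def cell_def cylinder_eq mem_Times_iff)

lemma coded_rect_coarsen:
  assumes "l0 \<le> l" "b0 \<le> b"
  shows "coded_rect j a l0 b0 S = coded_rect j a l b
    {p. (map (\<lambda>x. x div 2 ^ (l - l0)) (take j (fst p)), map (\<lambda>x. x div 2 ^ (l - l0)) (take b0 (snd p))) \<in> S}"
  unfolding coded_rect_def
  using dyadic_code_coarsen[OF assms(1) order_refl, of 0 j] dyadic_code_coarsen[OF assms] by auto

lemma cylinder_in_gen_sa_atLeast: "is \<in> dyadic_words k l \<Longrightarrow> cylinder l a is \<in> gen_sa \<mu> {a..}"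
  using cylinder_in_gen_sa gen_sa_mono[of "{a..<a + k}" "{a..}"] by fastforce

lemma cylinder_disjoint: "u \<noteq> v \<Longrightarrow> length u = length v \<Longrightarrow> cylinder l a u \<inter> cylinder l a v = {}"
  unfolding cylinder_def by auto

lemma cell_sets:
  "p \<in> dyadic_words j l \<times> dyadic_words b l \<Longrightarrow> cell l a p \<in> sets (product_law {0..<j} {a..})"
  unfolding cell_def using cylinder_in_gen_sa[of "fst p" j l 0] cylinder_in_gen_sa_atLeast[of "snd p" b l a]
  by auto

lemma coded_rect_sets: "coded_rect j a l b S \<in> sets (product_law {0..<j} {a..})"
  unfolding coded_rect_eq_UN_cell using cell_sets finite_dyadic_words by (intro sets.finite_UN) auto

lemma measure_joint_law_cell:
  "p \<in> dyadic_words j l \<times> dyadic_words b l \<Longrightarrow>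
    measure (joint_law {0..<j} {a..}) (cell l a p) = prob (cylinder l 0 (fst p) \<inter> cylinder l a (snd p))"
  unfolding cell_def using cylinder_in_gen_sa[of "fst p" j l 0] cylinder_in_gen_sa_atLeast[of "snd p" b l a]
  by (intro measure_joint_law_Times) auto

lemma measure_product_law_cell:
  "p \<in> dyadic_words j l \<times> dyadic_words b l \<Longrightarrow>
    measure (product_law {0..<j} {a..}) (cell l a p) = prob (cylinder l 0 (fst p)) * prob (cylinder l 0 (snd p))"
  unfolding cell_def using cylinder_in_gen_sa[of "fst p" j l 0] cylinder_in_gen_sa_atLeast[of "snd p" b l a]
    prob_cylinder[of "snd p" b l a]
  by (subst measure_product_law_Times) auto

lemma finite_partition_pair_cells:
  "finite_partition_pair (joint_law {0..<j} {a..}) (product_law {0..<j} {a..})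
     (dyadic_words j l \<times> dyadic_words b l) (cell l a)"
proof (rule finite_partition_pair.intro)
  show "prob_space (joint_law {0..<j} {a..})" by (rule prob_space_joint_law)
  show "prob_space (product_law {0..<j} {a..})" by (rule prob_space_product_law)
  show "sets (product_law {0..<j} {a..}) = sets (joint_law {0..<j} {a..})" by simp
  show "finite (dyadic_words j l \<times> dyadic_words b l)" by (simp add: finite_dyadic_words)
  show "cell l a p \<in> sets (joint_law {0..<j} {a..})" if "p \<in> dyadic_words j l \<times> dyadic_words b l" for p
    using cell_sets[OF that] by simp
  have "cell l a p \<inter> cell l a p' = {}"
    if "p \<in> dyadic_words j l \<times> dyadic_words b l" "p' \<in> dyadic_words j l \<times> dyadic_words b l" "p \<noteq> p'" for p p'
    using that cylinder_disjoint[of "fst p" "fst p'" l 0] cylinder_disjoint[of "snd p" "snd p'" l a]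
    unfolding cell_def dyadic_words_def by (auto simp: prod_eq_iff)
  then show "disjoint_family_on (cell l a) (dyadic_words j l \<times> dyadic_words b l)"
    unfolding disjoint_family_on_def by blast
  show "(\<Union>p\<in>dyadic_words j l \<times> dyadic_words b l. cell l a p) = space (joint_law {0..<j} {a..})"
    using coded_rect_eq_UN_cell[of j a l b UNIV] by (simp add: coded_rect_def space_pair_measure)
qed

lemma cell_discrepancy_eq_sum_cells:
  assumes "j \<in> {1..n - m}" "m \<ge> 1"
  defines "a \<equiv> j + m - 1" and "b \<equiv> n - m - j + 1"
  shows "cell_discrepancy l n m j = (1 / 2) * (\<Sum>p\<in>dyadic_words j l \<times> dyadic_words b l.
      \<bar>measure (joint_law {0..<j} {a..}) (cell l a p) - measure (product_law {0..<j} {a..}) (cell l a p)\<bar>)"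
  unfolding cell_discrepancy_def a_def b_def
  by (simp add: measure_joint_law_cell measure_product_law_cell sum.cartesian_product split_def)

lemma cell_discrepancy_le_beta_coef:
  assumes j: "j \<in> {1..n - m}" and m: "m \<ge> 1"
  shows "cell_discrepancy l n m j \<le> beta_coef \<mu> m"
proof -
  define a where "a = j + m - 1"
  define b where "b = n - m - j + 1"
  interpret finite_partition_pair "joint_law {0..<j} {a..}" "product_law {0..<j} {a..}"
      "dyadic_words j l \<times> dyadic_words b l" "cell l a"
    by (rule finite_partition_pair_cells)
  let ?K = "{p\<in>dyadic_words j l \<times> dyadic_words b l.
    measure (joint_law {0..<j} {a..}) (cell l a p) - measure (product_law {0..<j} {a..}) (cell l a p) > 0}"
  have sets_K: "(\<Union>p\<in>?K. cell l a p) \<in> sets (product_law {0..<j} {a..})"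
    using cell_sets finite_dyadic_words by (intro sets.finite_UN) auto
  have "cell_discrepancy l n m j
      = measure (joint_law {0..<j} {a..}) (\<Union>p\<in>?K. cell l a p) - measure (product_law {0..<j} {a..}) (\<Union>p\<in>?K. cell l a p)"
    unfolding cell_discrepancy_eq_sum_cells[OF j m] a_def[symmetric] b_def[symmetric]
    by (rule measure_diff_UN_positive_cells[symmetric])
  also have "\<dots> \<le> beta_sa \<mu> (gen_sa \<mu> {0..<j}) (gen_sa \<mu> {a..})"
    using abs_measure_joint_product_le_beta_sa[OF sets_K] by simp
  also have "\<dots> \<le> beta_coef \<mu> m" unfolding a_def using j by (intro beta_sa_le_beta_coef) auto
  finally show ?thesis .
qed

lemma dyadic_beta_le_beta_coef: "m \<ge> 1 \<Longrightarrow> m < n \<Longrightarrow> dyadic_beta l n m \<le> beta_coef \<mu> m"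
  unfolding dyadic_beta_def using cell_discrepancy_le_beta_coef by (intro Max.boundedI) auto

lemma abs_measure_coded_rect_le_cell_discrepancy:
  assumes j: "j \<in> {1..n - m}" and m: "m \<ge> 1" and l: "l0 \<le> l" and b: "b0 \<le> n - m - j + 1"
  shows "\<bar>measure (joint_law {0..<j} {j + m - 1..}) (coded_rect j (j + m - 1) l0 b0 S)
          - measure (product_law {0..<j} {j + m - 1..}) (coded_rect j (j + m - 1) l0 b0 S)\<bar>
         \<le> cell_discrepancy l n m j"
proof -
  define a where "a = j + m - 1"
  define b where "b = n - m - j + 1"
  interpret finite_partition_pair "joint_law {0..<j} {a..}" "product_law {0..<j} {a..}"
      "dyadic_words j l \<times> dyadic_words b l" "cell l a"
    by (rule finite_partition_pair_cells)
  define S' where "S' = {p. (map (\<lambda>x. x div 2 ^ (l - l0)) (take j (fst p)),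
    map (\<lambda>x. x div 2 ^ (l - l0)) (take b0 (snd p))) \<in> S}"
  have "coded_rect j a l0 b0 S = coded_rect j a l b S'"
    unfolding S'_def using l b unfolding b_def by (intro coded_rect_coarsen) auto
  then have "coded_rect j a l0 b0 S = (\<Union>p\<in>(dyadic_words j l \<times> dyadic_words b l) \<inter> S'. cell l a p)"
    by (simp add: coded_rect_eq_UN_cell)
  then show ?thesis
    unfolding a_def[symmetric] cell_discrepancy_eq_sum_cells[OF j m] b_def[symmetric]
    using abs_measure_diff_UN_le[of "(dyadic_words j l \<times> dyadic_words b l) \<inter> S'"] by simp
qed

end

definition dyadic_index_sets :: "real set set" where
  "dyadic_index_sets = {{x. dyadic_index l x \<in> S} | l S. True}"

lemma dyadic_index_set_borel: "{x. dyadic_index l x \<in> S} \<in> sets borel"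
  using measurable_sets[OF dyadic_index_measurable, of S l] by (simp add: vimage_def)

lemma dyadic_index_sets_subset_borel: "dyadic_index_sets \<subseteq> sets borel"
  unfolding dyadic_index_sets_def using dyadic_index_set_borel by blast

lemma algebra_dyadic_index_sets: "algebra UNIV dyadic_index_sets"
  unfolding algebra_iff_Un
proof (intro conjI ballI)
  show "{} \<in> dyadic_index_sets" unfolding dyadic_index_sets_def by (auto intro!: exI[of _ "{}"])
  fix R assume "R \<in> dyadic_index_sets"
  then obtain l S where "R = {x. dyadic_index l x \<in> S}" unfolding dyadic_index_sets_def by auto
  then show "UNIV - R \<in> dyadic_index_sets" unfolding dyadic_index_sets_def by (auto intro!: exI[of _ "- S"])
next
  fix R1 R2 assume "R1 \<in> dyadic_index_sets" "R2 \<in> dyadic_index_sets"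
  then obtain l1 S1 l2 S2 where R: "R1 = {x. dyadic_index l1 x \<in> S1}" "R2 = {x. dyadic_index l2 x \<in> S2}"
    unfolding dyadic_index_sets_def by auto
  let ?l = "max l1 l2"
  have "R1 = {x. dyadic_index ?l x \<in> {k. k div 2 ^ (?l - l1) \<in> S1}}"
    "R2 = {x. dyadic_index ?l x \<in> {k. k div 2 ^ (?l - l2) \<in> S2}}"
    unfolding R using dyadic_index_coarsen[of l1 ?l] dyadic_index_coarsen[of l2 ?l] by auto
  then have "R1 \<union> R2 = {x. dyadic_index ?l x \<in> {k. k div 2 ^ (?l - l1) \<in> S1} \<union> {k. k div 2 ^ (?l - l2) \<in> S2}}"
    by auto
  then show "R1 \<union> R2 \<in> dyadic_index_sets" unfolding dyadic_index_sets_def by blast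
qed simp

lemma tendsto_measure_left_strip:
  fixes r :: real
  assumes "finite_measure M" "sets M = sets borel"
  shows "(\<lambda>l. measure M {r - 1 / 2 ^ l..<r}) \<longlonglongrightarrow> 0"
proof -
  interpret finite_measure M by fact
  have "decseq (\<lambda>l::nat. {r - 1 / 2 ^ l..<r})"
    unfolding decseq_def by (auto intro: order.trans[OF diff_left_mono] divide_left_mono power_increasing)
  moreover have "(\<Inter>l::nat. {r - 1 / 2 ^ l..<r}) = {}"
  proof (intro equals0I)
    fix x assume "x \<in> (\<Inter>l::nat. {r - 1 / 2 ^ l..<r})"
    then have "x < r" and lower: "\<And>l::nat. r - 1 / 2 ^ l \<le> x" by auto
    then obtain l where "(1 / 2 :: real) ^ l < r - x"
      using real_arch_pow_inv[of "r - x" "1 / 2"] by auto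
    then show False using lower[of l] power_one_over[of "2 :: real" l] by linarith
  qed
  ultimately show ?thesis
    using finite_Lim_measure_decseq[of "\<lambda>l. {r - 1 / 2 ^ l..<r}"] assms(2) by (simp add: image_subset_iff)
qed

lemma sym_diff_lessThan_dyadic_subset:
  "sym_diff {..<r} {x. dyadic_index l x \<in> {k. real k + 1 < r * 2 ^ l}} \<subseteq> - {0..1} \<union> {r - 1 / 2 ^ l..<r}"
proof
  fix x assume x: "x \<in> sym_diff {..<r} {x. dyadic_index l x \<in> {k. real k + 1 < r * 2 ^ l}}"
  show "x \<in> - {0..1} \<union> {r - 1 / 2 ^ l..<r}"
  proof (cases "x \<in> {0..1}")
    case True
    then have b: "real (dyadic_index l x) \<le> x * 2 ^ l" "x * 2 ^ l \<le> real (dyadic_index l x) + 1"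
      using dyadic_index_bounds by auto
    show ?thesis
    proof (cases "x < r")
      case True
      then have "r * 2 ^ l \<le> real (dyadic_index l x) + 1" using x by auto
      then have "r - 1 / 2 ^ l \<le> x" using b by (simp add: field_simps)
      then show ?thesis using True by simp
    next
      case False
      then have "real (dyadic_index l x) + 1 < r * 2 ^ l" using x by auto
      then have "x * 2 ^ l < r * 2 ^ l" using b by linarith
      then show ?thesis using False by simp
    qed
  qed simp
qed

lemma approximable_lessThan:
  assumes N: "prob_space N" "sets N = sets borel" "measure N (- {0..1}) = 0"
  shows "approximable N N dyadic_index_sets {..<r}"
  unfolding approximable_def
proof (intro allI impI)
  interpret N: prob_space N by (rule N(1))
  fix e :: real assume e: "e > 0"
  obtain l where l: "measure N {r - 1 / 2 ^ l..<r} < e / 2"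
    using order_tendstoD(2)[OF tendsto_measure_left_strip[OF N.finite_measure_axioms N(2)], of "e / 2" r] e
    by (auto simp: eventually_sequentially)
  define R where "R = {x. dyadic_index l x \<in> {k. real k + 1 < r * 2 ^ l}}"
  have "R \<in> sets borel" unfolding R_def by (rule dyadic_index_set_borel)
  then have "measure N (sym_diff {..<r} R) \<le> measure N (- {0..1}) + measure N {r - 1 / 2 ^ l..<r}"
    using N(2) sym_diff_lessThan_dyadic_subset[of r l] unfolding R_def
    by (intro order.trans[OF N.finite_measure_mono measure_Un_le]) auto
  moreover have "R \<in> dyadic_index_sets" unfolding dyadic_index_sets_def R_def by blast
  ultimately show "\<exists>R\<in>dyadic_index_sets. measure N (sym_diff {..<r} R) + measure N (sym_diff {..<r} R) < e"
    using N(3) l by (intro bexI[of _ R]) auto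
qed

lemma approximable_dyadic_index_sets:
  assumes N: "prob_space N" "sets N = sets borel" "measure N (- {0..1}) = 0" and A: "A \<in> sets borel"
  shows "approximable N N dyadic_index_sets A"
proof -
  interpret N: prob_space N by (rule N(1))
  have space: "space N = UNIV" using sets_eq_imp_space_eq[OF N(2)] by simp
  show ?thesis
  proof (rule approximable_sigma_sets[where G = "range lessThan"])
    show "finite_measure N" by (rule N.finite_measure_axioms)
    show "finite_measure N" by (rule N.finite_measure_axioms)
    show "sets N = sets N" ..
    show "algebra (space N) dyadic_index_sets" unfolding space by (rule algebra_dyadic_index_sets)
    show "dyadic_index_sets \<subseteq> sets N" using N(2) dyadic_index_sets_subset_borel by simp
    show "range lessThan \<subseteq> sets N" unfolding N(2) by (blast intro: lessThan_borel)
    show "approximable N N dyadic_index_sets g" if "g \<in> range lessThan" for g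
      using that approximable_lessThan[OF N] by blast
    show "A \<in> sigma_sets (space N) (range lessThan)"
      using A unfolding space borel_Iio by (simp add: sets_measure_of)
  qed
qed

lemma (in finite_measure) abs_measure_diff_le_measure_sym_diff:
  assumes "A \<in> sets M" "B \<in> sets M"
  shows "\<bar>measure M A - measure M B\<bar> \<le> measure M (sym_diff A B)"
proof -
  have "measure M A \<le> measure M B + measure M (sym_diff A B)"
    using assms by (intro order.trans[OF finite_measure_mono[of A "B \<union> sym_diff A B"] measure_Un_le]) auto
  moreover have "measure M B \<le> measure M A + measure M (sym_diff A B)"
    using assms by (intro order.trans[OF finite_measure_mono[of B "A \<union> sym_diff A B"] measure_Un_le]) auto
  ultimately show ?thesis by linarith
qed

context stationary_process
begin

definition coded_set :: "nat \<Rightarrow> nat \<Rightarrow> nat \<Rightarrow> nat list set \<Rightarrow> (nat \<Rightarrow> real) set" where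
  "coded_set l a k S = {\<omega>\<in>space \<mu>. dyadic_code l a k \<omega> \<in> S}"

definition coded_sets :: "nat \<Rightarrow> (nat \<Rightarrow> bool) \<Rightarrow> (nat \<Rightarrow> real) set set" where
  "coded_sets a P = {coded_set l a k S | l k S. P k}"

definition coded_rects :: "nat \<Rightarrow> nat \<Rightarrow> ((nat \<Rightarrow> real) \<times> (nat \<Rightarrow> real)) set set" where
  "coded_rects j a = {coded_rect j a l b S | l b S. True}"

lemma coded_set_coarsen:
  "l0 \<le> l \<Longrightarrow> k0 \<le> k \<Longrightarrow>
    coded_set l0 a k0 S = coded_set l a k {xs. map (\<lambda>x. x div 2 ^ (l - l0)) (take k0 xs) \<in> S}"
  unfolding coded_set_def using dyadic_code_coarsen by auto

lemma coded_set_in_gen_sa: "coded_set l a k S \<in> gen_sa \<mu> {a..<a + k}"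
proof -
  interpret G: sigma_algebra "space \<mu>" "gen_sa \<mu> {a..<a + k}" by (rule sigma_algebra_gen_sa)
  have "coded_set l a k S = (\<Union>w\<in>dyadic_words k l \<inter> S. cylinder l a w)"
  proof (intro equalityI subsetI)
    fix x assume "x \<in> coded_set l a k S"
    then show "x \<in> (\<Union>w\<in>dyadic_words k l \<inter> S. cylinder l a w)"
      unfolding coded_set_def cylinder_def
      by (intro UN_I[of "dyadic_code l a k x"]) (auto simp: dyadic_code_in_words)
  qed (auto simp: coded_set_def cylinder_eq)
  then show ?thesis using finite_dyadic_words cylinder_in_gen_sa by (auto intro!: G.finite_UN)
qed

lemma algebra_coded_sets:
  assumes "P k0" "\<And>k1 k2. P k1 \<Longrightarrow> P k2 \<Longrightarrow> P (max k1 k2)"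
  shows "algebra (space \<mu>) (coded_sets a P)"
  unfolding algebra_iff_Un
proof (intro conjI ballI)
  show "coded_sets a P \<subseteq> Pow (space \<mu>)" unfolding coded_sets_def coded_set_def by auto
  show "{} \<in> coded_sets a P"
    unfolding coded_sets_def coded_set_def using assms(1) by (auto intro!: exI[of _ "{}"])
  fix R assume "R \<in> coded_sets a P"
  then obtain l k S where "R = coded_set l a k S" "P k" unfolding coded_sets_def by auto
  moreover have "space \<mu> - coded_set l a k S = coded_set l a k (- S)" unfolding coded_set_def by auto
  ultimately show "space \<mu> - R \<in> coded_sets a P" unfolding coded_sets_def by blast
next
  fix R1 R2 assume "R1 \<in> coded_sets a P" "R2 \<in> coded_sets a P"
  then obtain l1 k1 S1 l2 k2 S2 where R: "R1 = coded_set l1 a k1 S1" "P k1" "R2 = coded_set l2 a k2 S2" "P k2"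
    unfolding coded_sets_def by auto
  let ?l = "max l1 l2" and ?k = "max k1 k2"
  have "R1 = coded_set ?l a ?k {xs. map (\<lambda>x. x div 2 ^ (?l - l1)) (take k1 xs) \<in> S1}"
    "R2 = coded_set ?l a ?k {xs. map (\<lambda>x. x div 2 ^ (?l - l2)) (take k2 xs) \<in> S2}"
    unfolding R by (simp_all add: coded_set_coarsen)
  then have "R1 \<union> R2 = coded_set ?l a ?k
      ({xs. map (\<lambda>x. x div 2 ^ (?l - l1)) (take k1 xs) \<in> S1} \<union> {xs. map (\<lambda>x. x div 2 ^ (?l - l2)) (take k2 xs) \<in> S2})"
    unfolding coded_set_def by auto
  then show "R1 \<union> R2 \<in> coded_sets a P" unfolding coded_sets_def using assms(2)[OF R(2,4)] by blast
qed

lemma measure_coordinate_law_outside_unit: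
  "measure (distr \<mu> borel (\<lambda>\<omega>. \<omega> t)) (- {0..1}) = 0"
proof -
  have "(\<lambda>\<omega>. \<omega> t) -` (- {0..1}) \<inter> space \<mu> = {}" using space_\<mu> by auto
  then show ?thesis by (subst measure_distr) auto
qed

lemma approximable_coordinate_vimage:
  assumes A: "A \<in> sets borel" and k: "P k" "a \<le> t" "t < a + k"
  shows "approximable \<mu> \<mu> (coded_sets a P) ((\<lambda>\<omega>. \<omega> t) -` A \<inter> space \<mu>)"
  unfolding approximable_def
proof (intro allI impI)
  fix e :: real assume "e > 0"
  let ?N = "distr \<mu> borel (\<lambda>\<omega>. \<omega> t)"
  have "approximable ?N ?N dyadic_index_sets A"
    using A measure_coordinate_law_outside_unit by (intro approximable_dyadic_index_sets prob_space_distr) auto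
  then obtain l S where "2 * measure ?N (sym_diff A {x. dyadic_index l x \<in> S}) < e"
    using \<open>e > 0\<close> unfolding approximable_def dyadic_index_sets_def by auto
  moreover have "measure ?N (sym_diff A {x. dyadic_index l x \<in> S})
      = prob ((\<lambda>\<omega>. \<omega> t) -` sym_diff A {x. dyadic_index l x \<in> S} \<inter> space \<mu>)"
    using A dyadic_index_set_borel[of l S] by (subst measure_distr) auto
  moreover have "(\<lambda>\<omega>. \<omega> t) -` sym_diff A {x. dyadic_index l x \<in> S} \<inter> space \<mu>
      = sym_diff ((\<lambda>\<omega>. \<omega> t) -` A \<inter> space \<mu>) (coded_set l a k {xs. xs ! (t - a) \<in> S})"
    using k by (auto simp: coded_set_def dyadic_code_def)
  moreover have "coded_set l a k {xs. xs ! (t - a) \<in> S} \<in> coded_sets a P"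
    unfolding coded_sets_def using k by blast
  ultimately show "\<exists>R\<in>coded_sets a P. prob (sym_diff ((\<lambda>\<omega>. \<omega> t) -` A \<inter> space \<mu>) R)
      + prob (sym_diff ((\<lambda>\<omega>. \<omega> t) -` A \<inter> space \<mu>) R) < e"
    by (intro bexI) auto
qed

lemma approximable_gen_sa:
  assumes W: "W \<in> gen_sa \<mu> I"
    and cover: "\<And>t. t \<in> I \<Longrightarrow> \<exists>k. P k \<and> a \<le> t \<and> t < a + k"
    and P: "P k0" "\<And>k1 k2. P k1 \<Longrightarrow> P k2 \<Longrightarrow> P (max k1 k2)"
  shows "approximable \<mu> \<mu> (coded_sets a P) W"
proof (rule approximable_sigma_sets)
  show "finite_measure \<mu>" by (rule finite_measure_axioms)
  show "finite_measure \<mu>" by (rule finite_measure_axioms)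
  show "algebra (space \<mu>) (coded_sets a P)" by (rule algebra_coded_sets[OF P])
  show "coded_sets a P \<subseteq> sets \<mu>"
    unfolding coded_sets_def using coded_set_in_gen_sa gen_sa_subset_sets by blast
  show "(\<Union>t\<in>I. {(\<lambda>\<omega>. \<omega> t) -` A \<inter> space \<mu> | A. A \<in> sets borel}) \<subseteq> sets \<mu>" by auto
  show "W \<in> sigma_sets (space \<mu>) (\<Union>t\<in>I. {(\<lambda>\<omega>. \<omega> t) -` A \<inter> space \<mu> | A. A \<in> sets borel})"
    using W unfolding gen_sa_def .
  show "approximable \<mu> \<mu> (coded_sets a P) g"
    if "g \<in> (\<Union>t\<in>I. {(\<lambda>\<omega>. \<omega> t) -` A \<inter> space \<mu> | A. A \<in> sets borel})" for g
    using that cover approximable_coordinate_vimage by blast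
qed (rule refl)

end

lemma eventually_ge_of_mono_unbounded:
  fixes f :: "nat \<Rightarrow> nat"
  assumes "mono f" "\<not> bdd_above (range f)"
  shows "eventually (\<lambda>t. L \<le> f t) sequentially"
proof -
  obtain t0 where "L < f t0" using assms(2) by (meson bdd_aboveI2 not_le)
  then have "\<forall>t\<ge>t0. L \<le> f t" using assms(1) unfolding mono_def by (meson le_trans less_imp_le)
  then show ?thesis unfolding eventually_sequentially by blast
qed

context stationary_process
begin

lemma algebra_coded_rects: "algebra (space \<mu> \<times> space \<mu>) (coded_rects j a)"
  unfolding algebra_iff_Un
proof (intro conjI ballI)
  show "coded_rects j a \<subseteq> Pow (space \<mu> \<times> space \<mu>)" unfolding coded_rects_def coded_rect_def by auto
  show "{} \<in> coded_rects j a" unfolding coded_rects_def coded_rect_def by (auto intro!: exI[of _ "{}"])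
  fix R assume "R \<in> coded_rects j a"
  then obtain l b S where "R = coded_rect j a l b S" unfolding coded_rects_def by auto
  moreover have "space \<mu> \<times> space \<mu> - coded_rect j a l b S = coded_rect j a l b (- S)"
    unfolding coded_rect_def by auto
  ultimately show "space \<mu> \<times> space \<mu> - R \<in> coded_rects j a" unfolding coded_rects_def by blast
next
  fix R1 R2 assume "R1 \<in> coded_rects j a" "R2 \<in> coded_rects j a"
  then obtain l1 b1 S1 l2 b2 S2 where R: "R1 = coded_rect j a l1 b1 S1" "R2 = coded_rect j a l2 b2 S2"
    unfolding coded_rects_def by auto
  let ?l = "max l1 l2" and ?b = "max b1 b2"
  let ?T = "\<lambda>l0 b0 S. {p. (map (\<lambda>x. x div 2 ^ (?l - l0)) (take j (fst p)),
      map (\<lambda>x. x div 2 ^ (?l - l0)) (take b0 (snd p))) \<in> S}"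
  have "R1 = coded_rect j a ?l ?b (?T l1 b1 S1)" "R2 = coded_rect j a ?l ?b (?T l2 b2 S2)"
    unfolding R by (simp_all add: coded_rect_coarsen)
  then have "R1 \<union> R2 = coded_rect j a ?l ?b (?T l1 b1 S1 \<union> ?T l2 b2 S2)"
    unfolding coded_rect_def by auto
  then show "R1 \<union> R2 \<in> coded_rects j a" unfolding coded_rects_def by blast
qed

lemma coded_set_Times_coded_set:
  "coded_set l1 0 j S1 \<times> coded_set l2 a k S2 \<in> coded_rects j a"
proof -
  let ?l = "max l1 l2"
  have "coded_set l1 0 j S1 \<times> coded_set l2 a k S2
      = coded_set ?l 0 j {xs. map (\<lambda>x. x div 2 ^ (?l - l1)) (take j xs) \<in> S1}
        \<times> coded_set ?l a k {xs. map (\<lambda>x. x div 2 ^ (?l - l2)) (take k xs) \<in> S2}"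
    using coded_set_coarsen[of l1 ?l j j 0 S1] coded_set_coarsen[of l2 ?l k k a S2] by simp
  also have "\<dots> = coded_rect j a ?l k ({xs. map (\<lambda>x. x div 2 ^ (?l - l1)) (take j xs) \<in> S1}
      \<times> {xs. map (\<lambda>x. x div 2 ^ (?l - l2)) (take k xs) \<in> S2})"
    unfolding coded_set_def coded_rect_def by auto
  finally show ?thesis unfolding coded_rects_def by blast
qed

lemma measure_sym_diff_Times_le:
  assumes M: "M = product_law I J \<or> M = joint_law I J"
    and A: "A \<in> gen_sa \<mu> I" "A' \<in> gen_sa \<mu> I" and B: "B \<in> gen_sa \<mu> J" "B' \<in> gen_sa \<mu> J"
  shows "measure M (sym_diff (A \<times> B) (A' \<times> B')) \<le> prob (sym_diff A A') + prob (sym_diff B B')"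
proof -
  interpret M: prob_space M using M prob_space_product_law prob_space_joint_law by blast
  interpret GI: sigma_algebra "space \<mu>" "gen_sa \<mu> I" by (rule sigma_algebra_gen_sa)
  interpret GJ: sigma_algebra "space \<mu>" "gen_sa \<mu> J" by (rule sigma_algebra_gen_sa)
  have sets_M: "sets M = sets (product_law I J)" using M by auto
  have D: "sym_diff A A' \<in> gen_sa \<mu> I" "sym_diff B B' \<in> gen_sa \<mu> J" using A B by auto
  have "sym_diff (A \<times> B) (A' \<times> B') \<subseteq> sym_diff A A' \<times> space \<mu> \<union> space \<mu> \<times> sym_diff B B'"
    using A B GI.sets_into_space GJ.sets_into_space by blast
  moreover have "sym_diff (A \<times> B) (A' \<times> B') \<in> sets M"
    using A B sets_M by (intro sets.Un sets.Diff) (auto intro!: pair_measureI)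
  ultimately have "measure M (sym_diff (A \<times> B) (A' \<times> B'))
      \<le> measure M (sym_diff A A' \<times> space \<mu> \<union> space \<mu> \<times> sym_diff B B')"
    using D space_in_gen_sa sets_M by (intro M.finite_measure_mono) auto
  also have "\<dots> \<le> measure M (sym_diff A A' \<times> space \<mu>) + measure M (space \<mu> \<times> sym_diff B B')"
    using D space_in_gen_sa sets_M by (intro measure_Un_le) auto
  also have "\<dots> = prob (sym_diff A A') + prob (sym_diff B B')"
    using M D space_in_gen_sa gen_sa_subset_sets sets.sets_into_space
    by (auto simp: measure_product_law_Times measure_joint_law_Times Int_absorb1 Int_absorb2 prob_space)
  finally show ?thesis .
qed

lemma approximable_Times:
  assumes A: "A \<in> gen_sa \<mu> {0..<j}" and B: "B \<in> gen_sa \<mu> {a..}"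
  shows "approximable (product_law {0..<j} {a..}) (joint_law {0..<j} {a..}) (coded_rects j a) (A \<times> B)"
  unfolding approximable_def
proof (intro allI impI)
  fix e :: real assume "e > 0"
  have "approximable \<mu> \<mu> (coded_sets 0 (\<lambda>k. k = j)) A"
    using A by (rule approximable_gen_sa) auto
  then obtain l1 S1 where R1: "2 * prob (sym_diff A (coded_set l1 0 j S1)) < e / 2"
    using \<open>e > 0\<close> unfolding approximable_def coded_sets_def by (smt (verit) field_sum_of_halves mem_Collect_eq)
  have "approximable \<mu> \<mu> (coded_sets a (\<lambda>k. True)) B"
  proof (rule approximable_gen_sa[OF B])
    show "\<exists>k. True \<and> a \<le> t \<and> t < a + k" if "t \<in> {a..}" for t
      using that by (intro exI[of _ "Suc t"]) auto
  qed auto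
  then obtain l2 k S2 where R2: "2 * prob (sym_diff B (coded_set l2 a k S2)) < e / 2"
    using \<open>e > 0\<close> unfolding approximable_def coded_sets_def by (smt (verit) field_sum_of_halves mem_Collect_eq)
  have "coded_set l1 0 j S1 \<in> gen_sa \<mu> {0..<j}" using coded_set_in_gen_sa[of l1 0 j S1] by simp
  moreover have "coded_set l2 a k S2 \<in> gen_sa \<mu> {a..}"
    using coded_set_in_gen_sa[of l2 a k S2] gen_sa_mono[of "{a..<a + k}" "{a..}"] by fastforce
  ultimately have close: "measure M (sym_diff (A \<times> B) (coded_set l1 0 j S1 \<times> coded_set l2 a k S2)) < e / 2"
    if "M = product_law {0..<j} {a..} \<or> M = joint_law {0..<j} {a..}" for M
    using measure_sym_diff_Times_le[OF that A _ B] R1 R2 by fastforce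
  show "\<exists>R\<in>coded_rects j a. measure (product_law {0..<j} {a..}) (sym_diff (A \<times> B) R)
      + measure (joint_law {0..<j} {a..}) (sym_diff (A \<times> B) R) < e"
    using close[of "product_law {0..<j} {a..}"] close[of "joint_law {0..<j} {a..}"]
      coded_set_Times_coded_set[of l1 j S1 l2 a k S2]
    by (intro bexI[of _ "coded_set l1 0 j S1 \<times> coded_set l2 a k S2"]) auto
qed

lemma approximable_product_law_sets:
  assumes "W \<in> sets (product_law {0..<j} {a..})"
  shows "approximable (product_law {0..<j} {a..}) (joint_law {0..<j} {a..}) (coded_rects j a) W"
proof (rule approximable_sigma_sets)
  show "finite_measure (product_law {0..<j} {a..})"
    using prob_space_product_law by (rule prob_space.finite_measure)
  show "finite_measure (joint_law {0..<j} {a..})"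
    using prob_space_joint_law by (rule prob_space.finite_measure)
  show "algebra (space (product_law {0..<j} {a..})) (coded_rects j a)"
    using algebra_coded_rects by (simp add: space_pair_measure)
  show "coded_rects j a \<subseteq> sets (product_law {0..<j} {a..})"
    unfolding coded_rects_def using coded_rect_sets by blast
  let ?G = "{A \<times> B | A B. A \<in> gen_sa \<mu> {0..<j} \<and> B \<in> gen_sa \<mu> {a..}}"
  show "?G \<subseteq> sets (product_law {0..<j} {a..})" by auto
  show "W \<in> sigma_sets (space (product_law {0..<j} {a..})) ?G"
    using assms by (simp add: sets_pair_measure space_pair_measure)
  show "approximable (product_law {0..<j} {a..}) (joint_law {0..<j} {a..}) (coded_rects j a) g" if "g \<in> ?G" for g
    using that approximable_Times by blast
qed simp


text \<open>The supremum defining \<open>beta_coef \<mu> m\<close> is nearly attained on a product-measurable set, which in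
  turn is nearly a coded rectangle; for fine levels and long blocks such a rectangle is a union
  of the cells entering \<open>dyadic_beta\<close>.\<close>

lemma beta_coef_minus_le_dyadic_beta:
  assumes m: "m \<ge> 1" and e: "e > 0"
  shows "\<exists>L N. \<forall>l\<ge>L. \<forall>n\<ge>N. beta_coef \<mu> m - e \<le> dyadic_beta l n m"
proof -
  obtain j where j: "j \<ge> 1" "beta_coef \<mu> m - e / 3 < beta_sa \<mu> (gen_sa \<mu> {0..<j}) (gen_sa \<mu> {j + m - 1..})"
    using beta_coef_approx[of "e / 3" m] e by auto
  define a where "a = j + m - 1"
  let ?P = "joint_law {0..<j} {a..}" and ?Q = "product_law {0..<j} {a..}"
  interpret P: prob_space ?P by (rule prob_space_joint_law)
  interpret Q: prob_space ?Q by (rule prob_space_product_law)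
  obtain W where W: "W \<in> sets ?Q" "beta_sa \<mu> (gen_sa \<mu> {0..<j}) (gen_sa \<mu> {a..}) - e / 3 < \<bar>measure ?P W - measure ?Q W\<bar>"
    using beta_sa_approx[of "e / 3" "{0..<j}" "{a..}"] e by auto
  obtain R where R: "R \<in> coded_rects j a" "measure ?Q (sym_diff W R) + measure ?P (sym_diff W R) < e / 3"
    using approximable_product_law_sets[OF W(1)] e unfolding approximable_def by (meson divide_pos_pos zero_less_numeral)
  obtain l0 b0 S where RS: "R = coded_rect j a l0 b0 S" using R(1) unfolding coded_rects_def by auto
  have "\<bar>measure ?P W - measure ?P R\<bar> \<le> measure ?P (sym_diff W R)"
    "\<bar>measure ?Q W - measure ?Q R\<bar> \<le> measure ?Q (sym_diff W R)"
    using W(1) coded_rect_sets RS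
    by (auto intro!: P.abs_measure_diff_le_measure_sym_diff Q.abs_measure_diff_le_measure_sym_diff)
  then have close: "beta_coef \<mu> m - e < \<bar>measure ?P R - measure ?Q R\<bar>"
    using j(2) W(2) R(2) unfolding a_def by (simp add: abs_le_iff abs_less_iff) linarith
  show ?thesis
  proof (intro exI allI impI)
    fix l n assume l: "l0 \<le> l" and n: "j + m + b0 \<le> n"
    then have jn: "j \<in> {1..n - m}" using j(1) by auto
    have "beta_coef \<mu> m - e \<le> \<bar>measure ?P R - measure ?Q R\<bar>" using close by simp
    also have "\<dots> \<le> cell_discrepancy l n m j"
      unfolding RS a_def using abs_measure_coded_rect_le_cell_discrepancy[OF jn m l] n by auto
    also have "\<dots> \<le> dyadic_beta l n m" by (rule cell_discrepancy_le_dyadic_beta[OF jn])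
    finally show "beta_coef \<mu> m - e \<le> dyadic_beta l n m" .
  qed
qed

lemma tendsto_dyadic_beta:
  fixes ell n :: "nat \<Rightarrow> nat"
  assumes "mono ell" "\<not> bdd_above (range ell)" "mono n" "\<not> bdd_above (range n)" and m: "m \<ge> 1"
  shows "(\<lambda>t. dyadic_beta (ell t) (n t) m) \<longlonglongrightarrow> beta_coef \<mu> m"
proof (rule tendstoI)
  fix e :: real assume e: "e > 0"
  obtain L N where LN: "\<forall>l\<ge>L. \<forall>k\<ge>N. beta_coef \<mu> m - e / 2 \<le> dyadic_beta l k m"
    using beta_coef_minus_le_dyadic_beta[OF m, of "e / 2"] e by auto
  have "eventually (\<lambda>t. L \<le> ell t) sequentially" by (rule eventually_ge_of_mono_unbounded[OF assms(1,2)])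
  moreover have "eventually (\<lambda>t. max N (Suc m) \<le> n t) sequentially"
    by (rule eventually_ge_of_mono_unbounded[OF assms(3,4)])
  ultimately show "eventually (\<lambda>t. dist (dyadic_beta (ell t) (n t) m) (beta_coef \<mu> m) < e) sequentially"
  proof eventually_elim
    case (elim t)
    then have "beta_coef \<mu> m - e / 2 \<le> dyadic_beta (ell t) (n t) m" using LN by auto
    moreover have "dyadic_beta (ell t) (n t) m \<le> beta_coef \<mu> m"
      using elim m by (intro dyadic_beta_le_beta_coef) auto
    ultimately show ?case using e by (simp add: dist_real_def abs_if)
  qed
qed

text \<open>Tannery's theorem, with the summable majorant \<open>beta_coef \<mu> m\<close> of \<open>dyadic_beta l n m\<close>.\<close>

lemma tendsto_sum_dyadic_beta:
  fixes ell n M :: "nat \<Rightarrow> nat"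
  assumes summ: "summable (\<lambda>m. beta_coef \<mu> (Suc m))"
    and ell: "mono ell" "\<not> bdd_above (range ell)" and n: "mono n" "\<not> bdd_above (range n)"
    and M: "strict_mono M" and nM: "\<And>t. n t > M t"
  shows "(\<lambda>t. \<Sum>m=1..M t. dyadic_beta (ell t) (n t) m) \<longlonglongrightarrow> (\<Sum>m. beta_coef \<mu> (Suc m))"
proof -
  define a where "a k t = (if Suc k \<le> M t then dyadic_beta (ell t) (n t) (Suc k) else 0)" for k t
  have sum_eq: "(\<Sum>m=1..M t. dyadic_beta (ell t) (n t) m) = (\<Sum>k. a k t)" for t
  proof -
    have "(\<Sum>k. a k t) = (\<Sum>k<M t. a k t)" by (rule suminf_finite) (auto simp: a_def)
    also have "\<dots> = (\<Sum>k<M t. dyadic_beta (ell t) (n t) (Suc k))" by (rule sum.cong) (auto simp: a_def)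
    finally show ?thesis by (simp add: sum.atLeast1_atMost_eq)
  qed
  have "(\<lambda>t. a k t) \<longlonglongrightarrow> beta_coef \<mu> (Suc k)" for k
  proof -
    have "eventually (\<lambda>t. dyadic_beta (ell t) (n t) (Suc k) = a k t) sequentially"
      using eventually_ge_at_top[of "Suc k"]
    proof eventually_elim
      case (elim t)
      then have "Suc k \<le> M t" using seq_suble[OF M, of t] by linarith
      then show ?case by (simp add: a_def)
    qed
    then show ?thesis using tendsto_dyadic_beta[OF ell n, of "Suc k"] tendsto_cong by force
  qed
  moreover have "norm (a k t) \<le> beta_coef \<mu> (Suc k)" for k t
    using nM[of t] dyadic_beta_nonneg[of "Suc k" "n t" "ell t"] dyadic_beta_le_beta_coef[of "Suc k" "n t" "ell t"]
      beta_coef_nonneg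
    unfolding a_def by auto
  ultimately have "(\<lambda>t. \<Sum>k. a k t) \<longlonglongrightarrow> (\<Sum>k. beta_coef \<mu> (Suc k))"
    using summ beta_coef_nonneg
    by (intro tannerys_theorem[where M = "\<lambda>k. beta_coef \<mu> (Suc k)", THEN conjunct2, THEN conjunct2])
       (auto intro!: always_eventually)
  then show ?thesis unfolding sum_eq .
qed

end

section \<open>Almost sure convergence\<close>

lemma (in prob_space) AE_tendsto_of_summable_exceptional_sets:
  fixes X :: "nat \<Rightarrow> 'a \<Rightarrow> real"
  assumes A: "\<And>t. A t \<in> events" "summable (\<lambda>t. prob (A t))"
    and close: "\<And>t \<omega>. \<omega> \<in> space M - A t \<Longrightarrow> \<bar>X t \<omega> - c t\<bar> \<le> r t"
    and r: "r \<longlonglongrightarrow> 0" and c: "c \<longlonglongrightarrow> L"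
  shows "AE \<omega> in M. (\<lambda>t. X t \<omega>) \<longlonglongrightarrow> L"
proof -
  have "AE \<omega> in M. eventually (\<lambda>t. \<omega> \<in> space M - A t) sequentially"
    using A by (intro borel_cantelli_AE1) (auto simp: emeasure_eq_measure)
  then show ?thesis
  proof (rule AE_mp, intro AE_I2 impI)
    fix \<omega> assume "eventually (\<lambda>t. \<omega> \<in> space M - A t) sequentially"
    then have "eventually (\<lambda>t. norm (X t \<omega> - c t) \<le> r t) sequentially"
      by (rule eventually_mono) (simp add: close)
    then have "(\<lambda>t. X t \<omega> - c t) \<longlonglongrightarrow> 0" by (rule Lim_null_comparison[OF _ r])
    from tendsto_add[OF this c] show "(\<lambda>t. X t \<omega>) \<longlonglongrightarrow> L" by simp
  qed
qed

lemma seven_mult_le_power2: "1 \<le> x \<Longrightarrow> 7 * x \<le> (2::nat) ^ (2 * x + 1)"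
proof (induction x rule: nat_induct_at_least)
  case (Suc x)
  have "(2::nat) ^ 3 \<le> 2 ^ (2 * x + 1)" using Suc by (intro power_increasing) auto
  then show ?case using Suc by simp
qed simp

text \<open>With \<open>x = l n\<close>: \<open>27 n c^2 2^(3x) \<le> 2^(6x + 5)\<close> because \<open>c \<le> n \<le> 2^x\<close>, and
  \<open>6x + 5\<close> is below the exponent of \<open>Ctil k l n / k\<close>.\<close>

lemma Ctil_sample_size:
  assumes c: "1 \<le> c" "c \<le> n" and k: "1 \<le> k" and l: "1 \<le> l"
  shows "27 * real n * real c ^ 3 * 2 ^ (3 * (l * n)) \<le> real c * Ctil k l n / real k"
proof -
  define x where "x = n * l"
  have x: "1 \<le> x" using c l unfolding x_def by (simp add: Suc_le_eq)
  have "n < 2 ^ n" by (rule less_exp)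
  also have "(2::nat) ^ n \<le> 2 ^ x" unfolding x_def using l by (intro power_increasing) auto
  finally have nx: "n \<le> 2 ^ x" by simp
  have "27 * n * c ^ 2 * 2 ^ (3 * x) \<le> 32 * 2 ^ x * (2 ^ x) ^ 2 * 2 ^ (3 * x)"
    using nx c by (intro mult_mono power_mono) auto
  also have "\<dots> = (2::nat) ^ (5 + x + 2 * x + 3 * x)"
    by (simp only: power_add power_mult[symmetric] mult.commute) simp
  also have "\<dots> = (2::nat) ^ (6 * x + 5)" by (rule arg_cong[where f = "\<lambda>e. (2::nat) ^ e"]) simp
  also have "\<dots> \<le> 2 ^ (2 ^ (2 * n * l + 1) + 2 ^ (k * l + 1) + 2)"
  proof (rule power_increasing)
    have "(2::nat) ^ 2 \<le> 2 ^ (k * l + 1)" using k l by (intro power_increasing) (auto simp: Suc_le_eq)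
    then show "6 * x + 5 \<le> 2 ^ (2 * n * l + 1) + 2 ^ (k * l + 1) + 2"
      using seven_mult_le_power2[OF x] unfolding x_def by (simp add: mult.assoc)
  qed simp
  finally have "real (27 * n * c ^ 2 * 2 ^ (3 * x)) \<le> real ((2::nat) ^ (2 ^ (2 * n * l + 1) + 2 ^ (k * l + 1) + 2))"
    by (simp only: of_nat_le_iff)
  then have "27 * real n * real c ^ 2 * 2 ^ (3 * (l * n)) \<le> Ctil k l n / real k"
    using k unfolding Ctil_def x_def by (simp add: mult.commute)
  from mult_left_mono[OF this, of "real c"] show ?thesis
    by (simp add: power3_eq_cube power2_eq_square mult_ac)
qed

lemma real_nat_ceiling_divide_mult_ge: "0 < d \<Longrightarrow> C \<le> real (nat \<lceil>C / d\<rceil>) * d"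
  using real_nat_ceiling_ge[of "C / d"] by (simp add: divide_le_eq)

lemma exceptional_prob_bound:
  fixes c n X \<tau> \<epsilon> \<delta> K :: real
  assumes pos: "0 < c" "0 < n" "0 < X" "0 < \<epsilon>" "0 < \<tau>" "0 \<le> K"
    and size: "27 * n * c ^ 3 * X ^ 3 \<le> \<tau> * \<epsilon>\<^sup>2 * \<delta>"
  shows "c * (3 * n * X * (K / (\<tau> * (2 * \<epsilon> / (3 * c * X))\<^sup>2))) \<le> K * \<delta>"
proof -
  have "0 < 27 * n * c ^ 3 * X ^ 3" using pos by simp
  then have "0 < (\<tau> * \<epsilon>\<^sup>2) * \<delta>" using size by linarith
  moreover have "0 < \<tau> * \<epsilon>\<^sup>2" using pos by simp
  ultimately have "0 < \<delta>" by (simp add: zero_less_mult_iff)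
  have "c * (3 * n * X * (K / (\<tau> * (2 * \<epsilon> / (3 * c * X))\<^sup>2))) = (27 * n * c ^ 3 * X ^ 3) * K / (4 * \<tau> * \<epsilon>\<^sup>2)"
    using pos by (simp add: divide_simps) (simp add: algebra_simps power2_eq_square power3_eq_cube)
  also have "\<dots> \<le> (\<tau> * \<epsilon>\<^sup>2 * \<delta>) * K / (4 * \<tau> * \<epsilon>\<^sup>2)"
    using size pos by (intro divide_right_mono mult_right_mono) auto
  also have "\<dots> = K * \<delta> / 4" using pos by (simp add: field_simps power2_eq_square)
  also have "\<dots> \<le> K * \<delta>" using pos \<open>0 < \<delta>\<close> by simp
  finally show ?thesis .
qed

context stationary_process
begin

text \<open>At time \<open>t\<close> the exceptional event is the union over \<open>m \<in> I t\<close> of the inaccuracy events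
  at accuracy \<open>\<eta> = 2 eps t / (3 card (I t) 2^(l n))\<close>; the sample-size condition makes its
  probability at most a constant times \<open>dlt t\<close>, so Borel--Cantelli applies. At the finitely many
  times where the hypotheses fail, the whole space is taken as exceptional.\<close>

lemma prob_UN_inaccuracy_event_le:
  fixes l n \<tau> :: nat and I :: "nat set" and \<epsilon> \<delta> :: real
  defines "\<eta> \<equiv> 2 * \<epsilon> / (3 * real (card I) * 2 ^ (l * n))"
  assumes summ: "summable (\<lambda>m. beta_coef \<mu> (Suc m))"
    and I: "finite I" "I \<noteq> {}" "I \<subseteq> {1..<n}" and \<epsilon>: "0 < \<epsilon>"
    and size: "27 * real n * real (card I) ^ 3 * 2 ^ (3 * (l * n)) \<le> real \<tau> * \<epsilon>\<^sup>2 * \<delta>"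
  shows "prob (\<Union>m\<in>I. inaccuracy_event l n m \<tau> \<eta>) \<le> (1 + 2 * (\<Sum>m. beta_coef \<mu> (Suc m))) * \<delta>"
proof -
  define K where "K = 1 + 2 * (\<Sum>m. beta_coef \<mu> (Suc m))"
  define X where "X = (2::real) ^ (l * n)"
  have K: "0 \<le> K" unfolding K_def using suminf_nonneg[OF summ beta_coef_nonneg] by simp
  have c: "1 \<le> real (card I)" and n: "0 < real n" and mI: "\<And>m. m \<in> I \<Longrightarrow> 1 \<le> m \<and> m < n"
    using I by (auto simp: Suc_le_eq card_gt_0_iff)
  then have \<eta>: "0 < \<eta>" unfolding \<eta>_def using \<epsilon> by simp
  have "0 < 27 * real n * real (card I) ^ 3 * 2 ^ (3 * (l * n))" using n c by simp
  then have \<tau>: "1 \<le> \<tau>" using size by (cases \<tau>) auto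
  have "prob (\<Union>m\<in>I. inaccuracy_event l n m \<tau> \<eta>) \<le> (\<Sum>m\<in>I. prob (inaccuracy_event l n m \<tau> \<eta>))"
    using I by (intro measure_UNION_le) auto
  also have "\<dots> \<le> (\<Sum>m\<in>I. 3 * real n * X * (K / (real \<tau> * \<eta>\<^sup>2)))"
    using mI \<tau> \<eta> unfolding K_def X_def by (intro sum_mono prob_inaccuracy_event_le[OF summ]) auto
  also have "\<dots> = real (card I) * (3 * real n * X * (K / (real \<tau> * (2 * \<epsilon> / (3 * real (card I) * X))\<^sup>2)))"
    unfolding \<eta>_def X_def by simp
  also have "\<dots> \<le> K * \<delta>"
  proof (rule exceptional_prob_bound)
    have "X ^ 3 = 2 ^ (3 * (l * n))" unfolding X_def by (simp add: power_mult[symmetric] mult.commute)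
    then show "27 * real n * real (card I) ^ 3 * X ^ 3 \<le> real \<tau> * \<epsilon>\<^sup>2 * \<delta>" using size by simp
  qed (use c n \<epsilon> \<tau> K in \<open>auto simp: X_def\<close>)
  finally show ?thesis unfolding K_def .
qed

lemma abs_sum_beta_hat_minus_sum_dyadic_beta_le:
  fixes l n :: nat and I :: "nat set" and \<epsilon> :: real
  defines "\<eta> \<equiv> 2 * \<epsilon> / (3 * real (card I) * 2 ^ (l * n))"
  assumes \<omega>: "\<omega> \<in> space \<mu> - (\<Union>m\<in>I. inaccuracy_event l n m \<tau> \<eta>)"
    and I: "finite I" "I \<noteq> {}" "I \<subseteq> {1..<n}" and \<epsilon>: "0 < \<epsilon>"
  shows "\<bar>(\<Sum>m\<in>I. beta_hat l \<tau> n \<omega> m) - (\<Sum>m\<in>I. dyadic_beta l n m)\<bar> \<le> \<epsilon>"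
proof -
  have c: "1 \<le> real (card I)" using I by (auto simp: Suc_le_eq card_gt_0_iff)
  then have \<eta>: "0 < \<eta>" unfolding \<eta>_def using \<epsilon> by simp
  have "\<bar>beta_hat l \<tau> n \<omega> m - dyadic_beta l n m\<bar> \<le> \<epsilon> / real (card I)" if "m \<in> I" for m
  proof -
    have "\<bar>beta_hat l \<tau> n \<omega> m - dyadic_beta l n m\<bar> \<le> 3 / 2 * \<eta> * 2 ^ (l * n)"
      using \<omega> that I \<eta> by (intro abs_beta_hat_minus_dyadic_beta_le) auto
    also have "\<dots> = \<epsilon> / real (card I)" unfolding \<eta>_def by simp
    finally show ?thesis .
  qed
  then have "(\<Sum>m\<in>I. \<bar>beta_hat l \<tau> n \<omega> m - dyadic_beta l n m\<bar>) \<le> \<epsilon>"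
    using sum_mono[of I _ "\<lambda>_. \<epsilon> / real (card I)"] c by auto
  then show ?thesis by (simp add: sum_subtractf[symmetric] order.trans[OF sum_abs])
qed

lemma AE_tendsto_sum_beta_hat:
  fixes ell n \<tau> :: "nat \<Rightarrow> nat" and I :: "nat \<Rightarrow> nat set" and dlt eps :: "nat \<Rightarrow> real"
  assumes summ: "summable (\<lambda>m. beta_coef \<mu> (Suc m))"
    and dlt: "summable dlt" and eps: "eps \<longlonglongrightarrow> 0"
    and good: "eventually (\<lambda>t. finite (I t) \<and> I t \<noteq> {} \<and> I t \<subseteq> {1..<n t} \<and> 0 < eps t \<and>
      27 * real (n t) * real (card (I t)) ^ 3 * 2 ^ (3 * (ell t * n t)) \<le> real (\<tau> t) * (eps t)\<^sup>2 * dlt t)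
      sequentially"
    and lim: "(\<lambda>t. \<Sum>m\<in>I t. dyadic_beta (ell t) (n t) m) \<longlonglongrightarrow> L"
  shows "AE \<omega> in \<mu>. (\<lambda>t. \<Sum>m\<in>I t. beta_hat (ell t) (\<tau> t) (n t) \<omega> m) \<longlonglongrightarrow> L"
proof -
  define G where "G t \<longleftrightarrow> finite (I t) \<and> I t \<noteq> {} \<and> I t \<subseteq> {1..<n t} \<and> 0 < eps t \<and>
      27 * real (n t) * real (card (I t)) ^ 3 * 2 ^ (3 * (ell t * n t)) \<le> real (\<tau> t) * (eps t)\<^sup>2 * dlt t" for t
  define \<eta> where "\<eta> t = 2 * eps t / (3 * real (card (I t)) * 2 ^ (ell t * n t))" for t
  define A where "A t = (if G t then (\<Union>m\<in>I t. inaccuracy_event (ell t) (n t) m (\<tau> t) (\<eta> t)) else space \<mu>)" for t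
  have "A t \<in> events" for t unfolding A_def G_def by (auto intro!: sets.finite_UN)
  moreover have "summable (\<lambda>t. prob (A t))"
  proof (rule summable_comparison_test_ev)
    have "eventually G sequentially" using good unfolding G_def .
    then show "eventually (\<lambda>t. norm (prob (A t)) \<le> (1 + 2 * (\<Sum>m. beta_coef \<mu> (Suc m))) * dlt t) sequentially"
    proof (rule eventually_mono)
      fix t assume "G t"
      then show "norm (prob (A t)) \<le> (1 + 2 * (\<Sum>m. beta_coef \<mu> (Suc m))) * dlt t"
        unfolding A_def \<eta>_def G_def using prob_UN_inaccuracy_event_le[OF summ] by simp
    qed
  qed (rule summable_mult[OF dlt])
  moreover have "\<bar>(\<Sum>m\<in>I t. beta_hat (ell t) (\<tau> t) (n t) \<omega> m) - (\<Sum>m\<in>I t. dyadic_beta (ell t) (n t) m)\<bar> \<le> eps t"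
    if "\<omega> \<in> space \<mu> - A t" for t \<omega>
  proof -
    have "G t" using that unfolding A_def by (auto split: if_splits)
    then show ?thesis
      using that unfolding A_def \<eta>_def G_def by (intro abs_sum_beta_hat_minus_sum_dyadic_beta_le) auto
  qed
  ultimately show ?thesis using eps lim by (rule AE_tendsto_of_summable_exceptional_sets)
qed

lemma AE_tendsto_beta_hat:
  fixes ell n :: "nat \<Rightarrow> nat" and dlt eps :: "nat \<Rightarrow> real"
  assumes summ: "summable (\<lambda>m. beta_coef \<mu> (Suc m))"
    and ell: "\<forall>t. ell t > 0" "mono ell" "\<not> bdd_above (range ell)"
    and n: "mono n" "\<not> bdd_above (range n)"
    and dlt: "\<forall>t. dlt t > 0" "summable dlt" and eps: "\<forall>t. eps t > 0" "eps \<longlonglongrightarrow> 0"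
    and m: "m \<ge> 1"
  shows "AE \<omega> in \<mu>. (\<lambda>t. beta_hat (ell t) (nat \<lceil>Ctil m (ell t) (n t) / (real m * (eps t)\<^sup>2 * dlt t)\<rceil>) (n t) \<omega> m)
           \<longlonglongrightarrow> beta_coef \<mu> m"
proof -
  have "AE \<omega> in \<mu>. (\<lambda>t. \<Sum>m'\<in>{m}. beta_hat (ell t) (nat \<lceil>Ctil m (ell t) (n t) / (real m * (eps t)\<^sup>2 * dlt t)\<rceil>) (n t) \<omega> m')
           \<longlonglongrightarrow> beta_coef \<mu> m"
  proof (rule AE_tendsto_sum_beta_hat[OF summ dlt(2) eps(2)])
    show "(\<lambda>t. \<Sum>m'\<in>{m}. dyadic_beta (ell t) (n t) m') \<longlonglongrightarrow> beta_coef \<mu> m"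
      using tendsto_dyadic_beta[OF ell(2,3) n m] by simp
    show "eventually (\<lambda>t. finite {m} \<and> {m} \<noteq> {} \<and> {m} \<subseteq> {1..<n t} \<and> 0 < eps t \<and>
        27 * real (n t) * real (card {m}) ^ 3 * 2 ^ (3 * (ell t * n t))
          \<le> real (nat \<lceil>Ctil m (ell t) (n t) / (real m * (eps t)\<^sup>2 * dlt t)\<rceil>) * (eps t)\<^sup>2 * dlt t) sequentially"
      using eventually_ge_of_mono_unbounded[OF n, of "Suc m"]
    proof eventually_elim
      case (elim t)
      have "27 * real (n t) * 2 ^ (3 * (ell t * n t)) \<le> Ctil m (ell t) (n t) / real m"
        using Ctil_sample_size[of 1 "n t" m "ell t"] elim m ell(1) by (simp add: Suc_le_eq)
      also have "\<dots> \<le> real (nat \<lceil>Ctil m (ell t) (n t) / (real m * (eps t)\<^sup>2 * dlt t)\<rceil>) * (real m * (eps t)\<^sup>2 * dlt t) / real m"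
        using m eps(1)[rule_format, of t] dlt(1)[rule_format, of t]
        by (intro divide_right_mono real_nat_ceiling_divide_mult_ge) auto
      finally show ?case using elim m eps(1) by (simp add: mult.assoc)
    qed
  qed
  then show ?thesis by simp
qed

lemma AE_tendsto_sum_beta_hat_Ctil:
  fixes ell n M :: "nat \<Rightarrow> nat" and dlt eps :: "nat \<Rightarrow> real"
  assumes summ: "summable (\<lambda>m. beta_coef \<mu> (Suc m))"
    and ell: "\<forall>t. ell t > 0" "mono ell" "\<not> bdd_above (range ell)"
    and n: "mono n" "\<not> bdd_above (range n)"
    and M: "\<forall>t. M t > 0" "strict_mono M" "\<forall>t. n t > M t"
    and dlt: "\<forall>t. dlt t > 0" "summable dlt" and eps: "\<forall>t. eps t > 0" "eps \<longlonglongrightarrow> 0"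
  shows "AE \<omega> in \<mu>. (\<lambda>t. \<Sum>m=1..M t. beta_hat (ell t) (nat \<lceil>Ctil (M t) (ell t) (n t) / ((eps t)\<^sup>2 * dlt t)\<rceil>) (n t) \<omega> m)
           \<longlonglongrightarrow> (\<Sum>m. beta_coef \<mu> (Suc m))"
proof (rule AE_tendsto_sum_beta_hat[OF summ dlt(2) eps(2)])
  show "(\<lambda>t. \<Sum>m=1..M t. dyadic_beta (ell t) (n t) m) \<longlonglongrightarrow> (\<Sum>m. beta_coef \<mu> (Suc m))"
    using M(3) by (intro tendsto_sum_dyadic_beta[OF summ ell(2,3) n M(2)]) auto
  show "eventually (\<lambda>t. finite {1..M t} \<and> {1..M t} \<noteq> {} \<and> {1..M t} \<subseteq> {1..<n t} \<and> 0 < eps t \<and>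
      27 * real (n t) * real (card {1..M t}) ^ 3 * 2 ^ (3 * (ell t * n t))
        \<le> real (nat \<lceil>Ctil (M t) (ell t) (n t) / ((eps t)\<^sup>2 * dlt t)\<rceil>) * (eps t)\<^sup>2 * dlt t) sequentially"
  proof (intro always_eventually allI)
    fix t
    have "27 * real (n t) * real (M t) ^ 3 * 2 ^ (3 * (ell t * n t)) \<le> real (M t) * Ctil (M t) (ell t) (n t) / real (M t)"
      using M ell(1) by (intro Ctil_sample_size) (auto simp: Suc_le_eq less_imp_le)
    also have "\<dots> \<le> real (nat \<lceil>Ctil (M t) (ell t) (n t) / ((eps t)\<^sup>2 * dlt t)\<rceil>) * ((eps t)\<^sup>2 * dlt t)"
      using M(1)[rule_format, of t] eps(1)[rule_format, of t] dlt(1)[rule_format, of t]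
      by (simp add: real_nat_ceiling_divide_mult_ge)
    finally show "finite {1..M t} \<and> {1..M t} \<noteq> {} \<and> {1..M t} \<subseteq> {1..<n t} \<and> 0 < eps t \<and>
      27 * real (n t) * real (card {1..M t}) ^ 3 * 2 ^ (3 * (ell t * n t))
        \<le> real (nat \<lceil>Ctil (M t) (ell t) (n t) / ((eps t)\<^sup>2 * dlt t)\<rceil>) * (eps t)\<^sup>2 * dlt t"
      using M(1)[rule_format, of t] M(3)[rule_format, of t] eps(1) by (auto simp: Suc_le_eq mult.assoc)
  qed
qed

end

theorem theorem5:
  fixes \<mu> :: "(nat \<Rightarrow> real) measure"
    and ell n M :: "nat \<Rightarrow> nat" and dlt eps :: "nat \<Rightarrow> real"
  assumes prob: "prob_space \<mu>"
    and sets_mu: "sets \<mu> = sets seq_space"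
    and stationary: "distr \<mu> \<mu> (\<lambda>\<omega> t. \<omega> (Suc t)) = \<mu>"
    and mixing: "(\<lambda>m. beta_coef \<mu> m) \<longlonglongrightarrow> 0"
    and finite_norm: "summable (\<lambda>m. beta_coef \<mu> (Suc m))"
    and l_pos: "\<forall>t. ell t > 0" and l_mono: "mono ell" and l_unb: "\<not> bdd_above (range ell)"
    and n_pos: "\<forall>t. n t > 0" and n_mono: "mono n" and n_unb: "\<not> bdd_above (range n)"
    and M_pos: "\<forall>t. M t > 0" and M_inc: "strict_mono M" and nM: "\<forall>t. n t > M t"
    and dlt_pos: "\<forall>t. dlt t > 0" and dlt_sum: "summable dlt"
    and eps_pos: "\<forall>t. eps t > 0" and eps_lim: "eps \<longlonglongrightarrow> 0"
  shows "(\<forall>m::nat. m \<ge> 1 \<longrightarrow>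
           (AE \<omega> in \<mu>.
              (\<lambda>t. beta_hat (ell t)
                      (nat \<lceil>Ctil m (ell t) (n t) / (real m * (eps t)\<^sup>2 * dlt t)\<rceil>)
                      (n t) \<omega> m)
              \<longlonglongrightarrow> beta_coef \<mu> m))
       \<and> (AE \<omega> in \<mu>.
            (\<lambda>t. \<Sum>m=1..M t. beta_hat (ell t)
                      (nat \<lceil>Ctil (M t) (ell t) (n t) / ((eps t)\<^sup>2 * dlt t)\<rceil>)
                      (n t) \<omega> m)
            \<longlonglongrightarrow> (\<Sum>m. beta_coef \<mu> (Suc m)))"
proof -
  interpret stationary_process \<mu> by (rule stationary_process.intro[OF prob sets_mu stationary])
  show ?thesis
    using AE_tendsto_beta_hat[OF finite_norm l_pos l_mono l_unb n_mono n_unb dlt_pos dlt_sum eps_pos eps_lim]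
      AE_tendsto_sum_beta_hat_Ctil[OF finite_norm l_pos l_mono l_unb n_mono n_unb M_pos M_inc nM
        dlt_pos dlt_sum eps_pos eps_lim]
    by blast
qed

end
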